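(* Let $A\in\mathrm{SL}(4,\mathbb{C})$ have characteristic polynomial $\chi_A(x)=x^4-c_3x^3+c_2x^2-c_1x+1$. If $c_3\neq\overline{c_1}$ or $c_2\notin\mathbb{R}$, then the characteristic polynomial of $A$ is not $c$-reciprocal. Suppose now that $c_3=\overline{c_1}$ and $c_2\in\mathbb{R}$. Then: (1) if the sequence $\{\operatorname{tr}(A^n)\}_{n\in\mathbb{N}}$ is bounded, then $A$ is $c$-reversible; (2) if this trace sequence is unbounded and the minimal polynomial of $A$ has degree different from $3$, then $A$ is $c$-reversible; (3) suppose the trace sequence is unbounded and the minimal polynomial of $A$ has degree $3$. (a) If $\operatorname{tr}(A)=x+iy$ with $x,y\in\mathbb{R}$, $x\neq 0$, $y\neq 0$, then $A$ is $c$-reversible. (b) If $\operatorname{tr}(A)\in\mathbb{R}$, then $A$ is $c$-reversible if and only if $c_2\neq \frac{c_3^2}{4}+2$; and if $\operatorname{tr}(A)$ is purely imaginary, then $A$ is $c$-reversible if and only if $c_2\neq\frac{c_3^2}{4}-2$.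
   Context: For a matrix $g$, $\overline{g}$ denotes its entrywise complex conjugate. $g\in\mathrm{SL}(n,\mathbb{C})$ is $c$-reversible if there exists $h\in\mathrm{SL}(n,\mathbb{C})$ with $hgh^{-1}=\overline{g}^{-1}$. A polynomial with nonzero roots is $c$-reciprocal if for every root $\lambda$, $\overline{\lambda}^{-1}$ is also a root with the same multiplicity. *)

theory Defs
  imports "Jordan_Normal_Form.Jordan_Normal_Form" "HOL-Computational_Algebra.Polynomial"
begin

definition SL_mat :: "nat \<Rightarrow> complex mat set" where
  "SL_mat n = {A. A \<in> carrier_mat n n \<and> det A = 1}"

definition conj_mat :: "complex mat \<Rightarrow> complex mat" where
  "conj_mat A = map_mat cnj A"

definition is_inv_mat :: "nat \<Rightarrow> complex mat \<Rightarrow> complex mat \<Rightarrow> bool" where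
  "is_inv_mat n B A \<longleftrightarrow> A \<in> carrier_mat n n \<and> B \<in> carrier_mat n n \<and> A * B = 1\<^sub>m n \<and> B * A = 1\<^sub>m n"

definition c_reversible :: "nat \<Rightarrow> complex mat \<Rightarrow> bool" where
  "c_reversible n g \<longleftrightarrow>
     (\<exists>h hinv ginv. h \<in> SL_mat n \<and> is_inv_mat n hinv h \<and> is_inv_mat n ginv (conj_mat g)
        \<and> h * g * hinv = ginv)"

definition c_reciprocal :: "complex poly \<Rightarrow> bool" where
  "c_reciprocal p \<longleftrightarrow>
     (\<forall>z. poly p z = 0 \<longrightarrow> poly p (inverse (cnj z)) = 0 \<and> order (inverse (cnj z)) p = order z p)"

definition poly_mat :: "nat \<Rightarrow> complex poly \<Rightarrow> complex mat \<Rightarrow> complex mat" where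
  "poly_mat n p A = fold_coeffs (\<lambda>a M. a \<cdot>\<^sub>m 1\<^sub>m n + A * M) p (0\<^sub>m n n)"

definition mat_trace :: "complex mat \<Rightarrow> complex" where
  "mat_trace A = (\<Sum>i<dim_row A. A $$ (i, i))"

definition is_minimal_poly :: "nat \<Rightarrow> complex mat \<Rightarrow> complex poly \<Rightarrow> bool" where
  "is_minimal_poly n A p \<longleftrightarrow> monic p \<and> poly_mat n p A = 0\<^sub>m n n \<and>
     (\<forall>q. q \<noteq> 0 \<and> poly_mat n q A = 0\<^sub>m n n \<longrightarrow> degree p \<le> degree q)"

definition minimal_poly :: "nat \<Rightarrow> complex mat \<Rightarrow> complex poly" where
  "minimal_poly n A = (THE p. is_minimal_poly n A p)"

end

theory Submission
  imports Defs "Jordan_Normal_Form.Jordan_Normal_Form_Uniqueness" "Jordan_Normal_Form.Jordan_Normal_Form_Existence"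
begin

text \<open>
  A matrix \<open>A \<in> SL(n, \<complex>)\<close> is c-reversible iff it is similar to \<open>(cnj A)\<^sup>-\<^sup>1\<close>: a similarity can
  always be rescaled into \<open>SL(n, \<complex>)\<close>. By the Jordan normal form this means that the generalized
  eigenspaces of \<open>\<mu>\<close> and of \<open>1 / cnj \<mu>\<close> have the same dimensions for all \<open>\<mu>\<close>. Likewise the
  characteristic polynomial is c-reciprocal iff its multiset of roots is invariant under
  \<open>\<mu> \<mapsto> 1 / cnj \<mu>\<close>, which for \<open>x\<^sup>4 - c\<^sub>3 x\<^sup>3 + c\<^sub>2 x\<^sup>2 - c\<^sub>1 x + 1\<close> means \<open>c\<^sub>3 = cnj c\<^sub>1\<close> and \<open>c\<^sub>2 \<in> \<real>\<close>.

  In that case, a 4 by 4 matrix can only fail to be c-reversible if its eigenvalues are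
  \<open>a, a, 1 / cnj a, 1 / cnj a\<close> with \<open>a \<noteq> 1 / cnj a\<close>, where one of the two eigenvalues has a single
  Jordan block and the other one two; this happens exactly when the minimal polynomial has
  degree 3. Then \<open>|a| \<noteq> 1\<close>, so the traces \<open>tr(A\<^sup>k) = 2 (a\<^sup>k + (1 / cnj a)\<^sup>k)\<close> are unbounded. Comparing
  coefficients of \<open>((x - a)(x - 1 / cnj a))\<^sup>2\<close> shows that \<open>a / cnj a = \<plusminus>1\<close>: either \<open>a\<close> is real, the
  trace is real and \<open>c\<^sub>2 = c\<^sub>3\<^sup>2 / 4 + 2\<close>, or \<open>a\<close> is purely imaginary, the trace is purely imaginary
  and \<open>c\<^sub>2 = c\<^sub>3\<^sup>2 / 4 - 2\<close>. Conversely, each of these coefficient conditions makes the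
  characteristic polynomial a square, and together with unbounded traces this forces such a
  pair of double eigenvalues.
\<close>

section \<open>Evaluating polynomials at matrices\<close>

lemma poly_mat_0 [simp]: "poly_mat n 0 A = 0\<^sub>m n n"
  unfolding poly_mat_def by simp

lemma poly_mat_pCons:
  assumes A: "A \<in> carrier_mat n n"
  shows "poly_mat n (pCons a p) A = a \<cdot>\<^sub>m 1\<^sub>m n + A * poly_mat n p A"
proof (cases "p = 0 \<and> a = 0")
  case True
  then show ?thesis using A by (auto simp: poly_mat_def intro!: eq_matI)
next
  case False
  then have "coeffs (pCons a p) = a # coeffs p"
    by (auto simp: coeffs_pCons_eq_cCons cCons_def)
  then show ?thesis unfolding poly_mat_def fold_coeffs_def by simp
qed

lemma poly_mat_carrier [simp]:
  assumes A: "A \<in> carrier_mat n n"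
  shows "poly_mat n p A \<in> carrier_mat n n"
  by (induct p rule: pCons_induct) (use A in \<open>auto simp: poly_mat_pCons\<close>)

lemma poly_mat_dim [simp]:
  assumes A: "A \<in> carrier_mat n n"
  shows "dim_row (poly_mat n p A) = n" "dim_col (poly_mat n p A) = n"
  using poly_mat_carrier[OF A, of p] by auto

lemma poly_mat_add:
  assumes A: "A \<in> carrier_mat n n"
  shows "poly_mat n (p + q) A = poly_mat n p A + poly_mat n q A"
proof (induct p q rule: poly_induct2)
  case (pCons a p b q)
  have P: "poly_mat n p A \<in> carrier_mat n n" "poly_mat n q A \<in> carrier_mat n n"
    using A by auto
  have "poly_mat n (pCons a p + pCons b q) A
      = (a + b) \<cdot>\<^sub>m 1\<^sub>m n + A * (poly_mat n p A + poly_mat n q A)"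
    using pCons by (simp add: poly_mat_pCons[OF A])
  also have "\<dots> = (a \<cdot>\<^sub>m 1\<^sub>m n + A * poly_mat n p A) + (b \<cdot>\<^sub>m 1\<^sub>m n + A * poly_mat n q A)"
    using A P by (subst mult_add_distrib_mat[of _ n n]) (auto intro!: eq_matI simp: algebra_simps)
  finally show ?case
    unfolding poly_mat_pCons[OF A] .
qed simp

lemma poly_mat_smult:
  assumes A: "A \<in> carrier_mat n n"
  shows "poly_mat n (Polynomial.smult c p) A = c \<cdot>\<^sub>m poly_mat n p A"
proof (induct p rule: pCons_induct)
  case (pCons a p)
  have P: "poly_mat n p A \<in> carrier_mat n n" using A by auto
  show ?case
    unfolding smult_pCons poly_mat_pCons[OF A] pCons using A P
    by (subst mult_smult_distrib[of _ n n _ n]) (auto intro!: eq_matI simp: algebra_simps)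
qed simp

lemma poly_mat_diff:
  assumes A: "A \<in> carrier_mat n n"
  shows "poly_mat n (p - q) A = poly_mat n p A - poly_mat n q A"
proof -
  have "poly_mat n (p - q) A = poly_mat n (p + Polynomial.smult (-1) q) A" by simp
  also have "\<dots> = poly_mat n p A + (-1) \<cdot>\<^sub>m poly_mat n q A"
    by (simp only: poly_mat_add[OF A] poly_mat_smult[OF A])
  finally show ?thesis
    using A by (auto intro!: eq_matI)
qed

lemma poly_mat_mult:
  assumes A: "A \<in> carrier_mat n n"
  shows "poly_mat n (p * q) A = poly_mat n p A * poly_mat n q A"
proof (induct p rule: pCons_induct)
  case 0
  then show ?case using A by (auto intro!: eq_matI)
next
  case (pCons a p)
  have P: "poly_mat n p A \<in> carrier_mat n n" "poly_mat n q A \<in> carrier_mat n n"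
    using A by auto
  have "poly_mat n (pCons a p * q) A = poly_mat n (Polynomial.smult a q + pCons 0 (p * q)) A"
    by simp
  also have "\<dots> = a \<cdot>\<^sub>m poly_mat n q A + A * (poly_mat n p A * poly_mat n q A)"
    unfolding poly_mat_add[OF A] poly_mat_smult[OF A] poly_mat_pCons[OF A] pCons
    using A P by (intro eq_matI) auto
  also have "\<dots> = (a \<cdot>\<^sub>m 1\<^sub>m n + A * poly_mat n p A) * poly_mat n q A"
    using A P by (subst add_mult_distrib_mat[of _ n n]) (auto simp: assoc_mult_mat[of _ n n _ n _ n])
  finally show ?case
    unfolding poly_mat_pCons[OF A] .
qed

lemma poly_mat_const:
  assumes A: "A \<in> carrier_mat n n"
  shows "poly_mat n [:c:] A = c \<cdot>\<^sub>m 1\<^sub>m n"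
  using poly_mat_pCons[OF A, of c 0] A by (auto intro!: eq_matI)

lemma poly_mat_linear:
  assumes A: "A \<in> carrier_mat n n"
  shows "poly_mat n [:-c, 1:] A = char_matrix A c"
  unfolding poly_mat_pCons[OF A] poly_mat_const[OF A] char_matrix_def
  using A by (intro eq_matI) auto

lemma poly_mat_power:
  assumes A: "A \<in> carrier_mat n n"
  shows "poly_mat n (p ^ k) A = poly_mat n p A ^\<^sub>m k"
proof (induct k)
  case 0
  then show ?case
    using poly_mat_const[OF A, of 1] A by (auto simp: one_pCons intro!: eq_matI)
next
  case (Suc k)
  have "poly_mat n (p ^ Suc k) A = poly_mat n (p ^ k * p) A" by (simp add: mult.commute)
  then show ?case
    unfolding poly_mat_mult[OF A] Suc by simp
qed

lemma poly_mat_mult_eigenvector: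
  assumes A: "A \<in> carrier_mat n n" and v: "v \<in> carrier_vec n" and Av: "A *\<^sub>v v = a \<cdot>\<^sub>v v"
  shows "poly_mat n p A *\<^sub>v v = poly p a \<cdot>\<^sub>v v"
proof (induct p rule: pCons_induct)
  case 0
  then show ?case using v by (auto intro!: eq_vecI simp: scalar_prod_def)
next
  case (pCons c p)
  have "poly_mat n (pCons c p) A *\<^sub>v v = c \<cdot>\<^sub>v v + A *\<^sub>v (poly_mat n p A *\<^sub>v v)"
    unfolding poly_mat_pCons[OF A] using A v
    by (subst add_mult_distrib_mat_vec[of _ n n]) (auto simp: assoc_mult_mat_vec[of _ n n _ n])
  also have "\<dots> = poly (pCons c p) a \<cdot>\<^sub>v v"
    unfolding pCons using A v Av by (auto simp: mult_mat_vec smult_smult_assoc algebra_simps)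
  finally show ?case .
qed

lemma poly_mat_mult_jordan_chain:
  assumes A: "A \<in> carrier_mat n n" and v: "v \<in> carrier_vec n" and w: "w \<in> carrier_vec n"
    and Av: "A *\<^sub>v v = a \<cdot>\<^sub>v v" and Aw: "A *\<^sub>v w = a \<cdot>\<^sub>v w + v"
  shows "poly_mat n p A *\<^sub>v w = poly p a \<cdot>\<^sub>v w + poly (pderiv p) a \<cdot>\<^sub>v v"
proof (induct p rule: pCons_induct)
  case 0
  then show ?case using v w by (auto intro!: eq_vecI simp: scalar_prod_def)
next
  case (pCons c p)
  have "poly_mat n (pCons c p) A *\<^sub>v w = c \<cdot>\<^sub>v w + A *\<^sub>v (poly_mat n p A *\<^sub>v w)"
    unfolding poly_mat_pCons[OF A] using A w
    by (subst add_mult_distrib_mat_vec[of _ n n]) (auto simp: assoc_mult_mat_vec[of _ n n _ n])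
  also have "\<dots> = c \<cdot>\<^sub>v w + (poly p a \<cdot>\<^sub>v (A *\<^sub>v w) + poly (pderiv p) a \<cdot>\<^sub>v (A *\<^sub>v v))"
    unfolding pCons using A v w by (subst mult_add_distrib_mat_vec[of _ n n]) (auto simp: mult_mat_vec)
  also have "\<dots> = poly (pCons c p) a \<cdot>\<^sub>v w + poly (pderiv (pCons c p)) a \<cdot>\<^sub>v v"
    unfolding Av Aw using v w by (intro eq_vecI) (auto simp: pderiv_pCons algebra_simps)
  finally show ?case .
qed

lemma poly_mat_similar:
  assumes wit: "similar_mat_wit A B P Q" and A: "A \<in> carrier_mat n n"
  shows "poly_mat n p A = P * poly_mat n p B * Q"
proof -
  from similar_mat_witD2[OF A wit] have PQ: "P * Q = 1\<^sub>m n" and QP: "Q * P = 1\<^sub>m n"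
    and AB: "A = P * B * Q" and B: "B \<in> carrier_mat n n" and P: "P \<in> carrier_mat n n"
    and Q: "Q \<in> carrier_mat n n" by auto
  show ?thesis
  proof (induct p rule: pCons_induct)
    case 0
    then show ?case using P Q by auto
  next
    case (pCons c p)
    define M where "M = poly_mat n p B"
    have M: "M \<in> carrier_mat n n" using B unfolding M_def by auto
    have "(P * B * Q) * (P * M * Q) = P * B * (Q * P) * M * Q"
      using P B Q M by (simp add: assoc_mult_mat[of _ n n _ n _ n])
    also have "\<dots> = P * (B * M) * Q"
      unfolding QP using P B Q M by (simp add: assoc_mult_mat[of _ n n _ n _ n])
    finally have conj: "(P * B * Q) * (P * M * Q) = P * (B * M) * Q" .
    have scalar: "c \<cdot>\<^sub>m 1\<^sub>m n = P * (c \<cdot>\<^sub>m 1\<^sub>m n) * Q"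
      using P Q PQ by (metis mult_smult_assoc_mat mult_smult_distrib one_carrier_mat right_mult_one_mat)
    have C: "c \<cdot>\<^sub>m 1\<^sub>m n \<in> carrier_mat n n" "B * M \<in> carrier_mat n n" using B M by auto
    have "poly_mat n (pCons c p) A = P * (c \<cdot>\<^sub>m 1\<^sub>m n) * Q + P * (B * M) * Q"
      unfolding poly_mat_pCons[OF A] pCons M_def[symmetric] AB[symmetric] conj[folded AB]
      using scalar by simp
    also have "\<dots> = (P * (c \<cdot>\<^sub>m 1\<^sub>m n) + P * (B * M)) * Q"
      using P Q C by (simp add: add_mult_distrib_mat[of _ n n _ _ n])
    also have "\<dots> = P * (c \<cdot>\<^sub>m 1\<^sub>m n + B * M) * Q"
      by (simp add: mult_add_distrib_mat[OF P C])
    finally show ?case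
      unfolding poly_mat_pCons[OF B] M_def .
  qed
qed

lemma poly_mat_four_block_diag:
  assumes A: "A \<in> carrier_mat n1 n1" and B: "B \<in> carrier_mat n2 n2"
  shows "poly_mat (n1 + n2) p (four_block_mat A (0\<^sub>m n1 n2) (0\<^sub>m n2 n1) B)
    = four_block_mat (poly_mat n1 p A) (0\<^sub>m n1 n2) (0\<^sub>m n2 n1) (poly_mat n2 p B)"
proof (induct p rule: pCons_induct)
  case 0
  then show ?case by (intro eq_matI) auto
next
  case (pCons c p)
  let ?F = "four_block_mat A (0\<^sub>m n1 n2) (0\<^sub>m n2 n1) B"
  have F: "?F \<in> carrier_mat (n1 + n2) (n1 + n2)" using A B by auto
  have PA: "poly_mat n1 p A \<in> carrier_mat n1 n1" and PB: "poly_mat n2 p B \<in> carrier_mat n2 n2"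
    using A B by auto
  have "?F * four_block_mat (poly_mat n1 p A) (0\<^sub>m n1 n2) (0\<^sub>m n2 n1) (poly_mat n2 p B)
      = four_block_mat (A * poly_mat n1 p A) (0\<^sub>m n1 n2) (0\<^sub>m n2 n1) (B * poly_mat n2 p B)"
    using A B PA PB by (subst mult_four_block_mat[OF A _ _ B PA _ _ PB]) auto
  then show ?case
    unfolding poly_mat_pCons[OF F] poly_mat_pCons[OF A] poly_mat_pCons[OF B] pCons
    using A B PA PB by (intro eq_matI) auto
qed

lemma poly_mat_jordan_block_eq_0:
  assumes "[:-c, 1:] ^ k dvd q"
  shows "poly_mat k q (jordan_block k c) = 0\<^sub>m k k"
proof -
  from assms obtain r where q: "q = [:-c, 1:] ^ k * r" by (auto elim: dvdE)
  have J: "jordan_block k c \<in> carrier_mat k k" by simp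
  have "poly_mat k ([:-c, 1:] ^ k) (jordan_block k c) = jordan_block k 0 ^\<^sub>m k"
    unfolding poly_mat_power[OF J] poly_mat_linear[OF J] char_matrix_jordan_block by simp
  also have "\<dots> = 0\<^sub>m k k"
    unfolding jordan_block_zero_pow by (intro eq_matI) auto
  finally show ?thesis
    unfolding q poly_mat_mult[OF J] using poly_mat_carrier[OF J, of r] by simp
qed

lemma poly_mat_jordan_matrix_eq_0:
  assumes "\<And>k c. (k, c) \<in> set n_as \<Longrightarrow> [:-c, 1:] ^ k dvd q"
  shows "poly_mat (sum_list (map fst n_as)) q (jordan_matrix n_as)
    = 0\<^sub>m (sum_list (map fst n_as)) (sum_list (map fst n_as))"
  using assms
proof (induct n_as)
  case Nil
  then show ?case unfolding jordan_matrix_def by (auto intro!: eq_matI)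
next
  case (Cons kc n_as)
  obtain k c where kc: "kc = (k, c)" by force
  have "poly_mat k q (jordan_block k c) = 0\<^sub>m k k"
    using Cons(2)[of k c] by (auto simp: kc intro: poly_mat_jordan_block_eq_0)
  with Cons show ?case
    unfolding kc jordan_matrix_Cons by (simp add: poly_mat_four_block_diag)
qed

lemma poly_mat_eq_0_if_jordan_nf:
  assumes A: "A \<in> carrier_mat n n" and jnf: "jordan_nf A n_as"
    and dvd: "\<And>k c. (k, c) \<in> set n_as \<Longrightarrow> [:-c, 1:] ^ k dvd q"
  shows "poly_mat n q A = 0\<^sub>m n n"
proof -
  from jnf obtain P Q where wit: "similar_mat_wit A (jordan_matrix n_as) P Q"
    unfolding jordan_nf_def similar_mat_def by auto
  from similar_mat_witD2[OF A wit] have J: "jordan_matrix n_as \<in> carrier_mat n n"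
    and P: "P \<in> carrier_mat n n" and Q: "Q \<in> carrier_mat n n" by auto
  then have n: "sum_list (map fst n_as) = n" by auto
  show ?thesis
    unfolding poly_mat_similar[OF wit A]
    using poly_mat_jordan_matrix_eq_0[of n_as q, OF dvd, unfolded n] P Q by simp
qed

lemma poly_mat_char_poly:
  assumes A: "A \<in> carrier_mat n n"
  shows "poly_mat n (char_poly A) A = 0\<^sub>m n n"
proof -
  obtain as where "char_poly A = (\<Prod>a\<leftarrow>as. [:- a, 1:])"
    using char_poly_factorized[OF A] by auto
  from jordan_nf_exists[OF A this] obtain n_as where jnf: "jordan_nf A n_as" ..
  show ?thesis
  proof (rule poly_mat_eq_0_if_jordan_nf[OF A jnf])
    fix k c assume "(k, c) \<in> set n_as"
    then have "k \<le> Polynomial.order c (char_poly A)" by (rule jordan_nf_block_size_order_bound[OF jnf])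
    then show "[:-c, 1:] ^ k dvd char_poly A"
      using degree_monic_char_poly[OF A] by (auto simp: order_divides)
  qed
qed

section \<open>The minimal polynomial\<close>

lemma is_minimal_polyD:
  assumes "is_minimal_poly n A p"
  shows "p \<noteq> 0" "monic p" "poly_mat n p A = 0\<^sub>m n n"
    "\<And>q. q \<noteq> 0 \<Longrightarrow> poly_mat n q A = 0\<^sub>m n n \<Longrightarrow> degree p \<le> degree q"
  using assms unfolding is_minimal_poly_def by auto

lemma is_minimal_poly_unique:
  assumes p: "is_minimal_poly n A p" and q: "is_minimal_poly n A q" and A: "A \<in> carrier_mat n n"
  shows "p = q"
proof (rule ccontr)
  assume "p \<noteq> q"
  then have pq: "p - q \<noteq> 0" by simp
  note p = is_minimal_polyD[OF p] and q = is_minimal_polyD[OF q]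
  have deg: "degree p = degree q"
    using p(4)[OF q(1,3)] q(4)[OF p(1,3)] by simp
  have "coeff (p - q) (degree p) = 0" "degree (p - q) \<le> degree p"
    using deg p(2) q(2) by (auto simp: degree_diff_le)
  with pq have "degree (p - q) < degree p"
    by (metis leading_coeff_neq_0 le_neq_implies_less)
  moreover have "poly_mat n (p - q) A = 0\<^sub>m n n"
    using p(3) q(3) A unfolding poly_mat_diff[OF A] by auto
  ultimately show False
    using p(4)[OF pq] by simp
qed

lemma is_minimal_poly_minimal_poly:
  assumes A: "A \<in> carrier_mat n n"
  shows "is_minimal_poly n A (minimal_poly n A)"
proof -
  let ?annihilates = "\<lambda>q. q \<noteq> 0 \<and> poly_mat n q A = 0\<^sub>m n n"
  define d where "d = (LEAST d. \<exists>q. ?annihilates q \<and> degree q = d)"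
  have "?annihilates (char_poly A)"
    using poly_mat_char_poly[OF A] degree_monic_char_poly[OF A] by auto
  then have "\<exists>q. ?annihilates q \<and> degree q = d"
    unfolding d_def by - (rule LeastI_ex, blast)
  then obtain q where q: "q \<noteq> 0" "poly_mat n q A = 0\<^sub>m n n" "degree q = d" by blast
  have d_le: "d \<le> degree r" if "?annihilates r" for r
    unfolding d_def by (rule Least_le) (use that in blast)
  define p where "p = Polynomial.smult (inverse (lead_coeff q)) q"
  have "monic p" "degree p = d" "poly_mat n p A = 0\<^sub>m n n"
    unfolding p_def q(3)[symmetric] using q(1,2) A by (simp_all add: poly_mat_smult)
  then have p: "is_minimal_poly n A p"
    unfolding is_minimal_poly_def using d_le by auto
  have "is_minimal_poly n A r \<Longrightarrow> r = p" for r
    using is_minimal_poly_unique[OF _ p A] .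
  with p show ?thesis
    unfolding minimal_poly_def by (rule theI)
qed

lemmas minimal_polyD = is_minimal_polyD[OF is_minimal_poly_minimal_poly]

lemma poly_eq_0_if_poly_mat_eq_0:
  assumes A: "A \<in> carrier_mat n n" and q: "poly_mat n q A = 0\<^sub>m n n" and c: "eigenvalue A c"
  shows "poly q c = 0"
proof -
  from c obtain v where v: "v \<in> carrier_vec n" "v \<noteq> 0\<^sub>v n" "A *\<^sub>v v = c \<cdot>\<^sub>v v"
    unfolding eigenvalue_def eigenvector_def using A by auto
  from v(1,2) obtain i where i: "i < n" "v $ i \<noteq> 0"
    by (metis carrier_vecD eq_vecI index_zero_vec)
  have "0\<^sub>m n n *\<^sub>v v = 0\<^sub>v n"
    using v(1) by (intro eq_vecI) (auto simp: scalar_prod_def)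
  then have "poly q c \<cdot>\<^sub>v v = 0\<^sub>v n"
    using poly_mat_mult_eigenvector[OF A v(1) v(3), of q] q by simp
  then have "poly q c * v $ i = 0"
    using i v(1) by (metis carrier_vecD index_smult_vec(1) index_zero_vec(1))
  with i show ?thesis by simp
qed

lemma char_matrix_mult_vec:
  assumes A: "A \<in> carrier_mat n n" and v: "v \<in> carrier_vec n"
  shows "char_matrix A c *\<^sub>v v = A *\<^sub>v v - c \<cdot>\<^sub>v v"
  unfolding char_matrix_def using A v
  by (intro eq_vecI) (auto simp: add_mult_distrib_mat_vec[of _ n n] algebra_simps)

lemma jordan_chain_if_dim_gen_eigenspace_neq:
  fixes A :: "complex mat"
  assumes A: "A \<in> carrier_mat n n" and d: "dim_gen_eigenspace A c 1 \<noteq> dim_gen_eigenspace A c 2"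
  obtains v w where "v \<in> carrier_vec n" "w \<in> carrier_vec n" "v \<noteq> 0\<^sub>v n"
    "A *\<^sub>v v = c \<cdot>\<^sub>v v" "A *\<^sub>v w = c \<cdot>\<^sub>v w + v"
proof -
  let ?M = "char_matrix A c"
  have M: "?M \<in> carrier_mat n n" using A by auto
  then have MM: "?M * ?M \<in> carrier_mat n n" by auto
  have "mat_kernel ?M \<noteq> mat_kernel (?M * ?M)"
  proof
    assume "mat_kernel ?M = mat_kernel (?M * ?M)"
    then have "kernel_dim (?M ^\<^sub>m 1) = kernel_dim (?M ^\<^sub>m 2)"
      using M by (simp add: kernel_dim_def numeral_2_eq_2)
    with d show False unfolding dim_gen_eigenspace_def by simp
  qed
  with mat_kernel_mult_subset[OF M M] obtain w where w2: "w \<in> mat_kernel (?M * ?M)"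
    and w1: "w \<notin> mat_kernel ?M" by auto
  from mat_kernelD[OF MM w2] have w: "w \<in> carrier_vec n" and MMw: "?M * ?M *\<^sub>v w = 0\<^sub>v n"
    by auto
  define v where "v = ?M *\<^sub>v w"
  have v: "v \<in> carrier_vec n" unfolding v_def using M w by auto
  have "v \<noteq> 0\<^sub>v n" using w1 mat_kernelI[OF M w] unfolding v_def by auto
  moreover have "?M *\<^sub>v v = 0\<^sub>v n"
    unfolding v_def using MMw M w by (simp add: assoc_mult_mat_vec[of _ n n _ n])
  then have "A *\<^sub>v v = c \<cdot>\<^sub>v v"
    unfolding char_matrix_mult_vec[OF A v] using A v by (intro eq_vecI) (auto simp: vec_eq_iff)
  moreover have "A *\<^sub>v w = c \<cdot>\<^sub>v w + v"
    using v_def unfolding char_matrix_mult_vec[OF A w] using A w by (intro eq_vecI) auto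
  ultimately show ?thesis using that v w by blast
qed

text \<open>Applying \<open>q(A) = 0\<close> to a Jordan chain \<open>v, w\<close> for \<open>c\<close> gives \<open>q(c) = q'(c) = 0\<close>.\<close>

lemma two_le_order_if_poly_mat_eq_0:
  fixes A :: "complex mat"
  assumes A: "A \<in> carrier_mat n n" and q0: "q \<noteq> 0" and q: "poly_mat n q A = 0\<^sub>m n n"
    and d: "dim_gen_eigenspace A c 1 \<noteq> dim_gen_eigenspace A c 2"
  shows "2 \<le> Polynomial.order c q"
proof -
  obtain v w where v: "v \<in> carrier_vec n" "v \<noteq> 0\<^sub>v n" "A *\<^sub>v v = c \<cdot>\<^sub>v v"
    and w: "w \<in> carrier_vec n" "A *\<^sub>v w = c \<cdot>\<^sub>v w + v"
    using jordan_chain_if_dim_gen_eigenspace_neq[OF A d] by metis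
  from v(1,2) obtain i where i: "i < n" "v $ i \<noteq> 0"
    by (metis carrier_vecD eq_vecI index_zero_vec)
  have "eigenvalue A c"
    using v A unfolding eigenvalue_def eigenvector_def by auto
  then have root: "poly q c = 0" by (rule poly_eq_0_if_poly_mat_eq_0[OF A q])
  have "0\<^sub>m n n *\<^sub>v w = 0\<^sub>v n"
    using w(1) by (intro eq_vecI) (auto simp: scalar_prod_def)
  then have "0\<^sub>v n = poly q c \<cdot>\<^sub>v w + poly (pderiv q) c \<cdot>\<^sub>v v"
    using poly_mat_mult_jordan_chain[OF A v(1) w(1) v(3) w(2), of q] q by simp
  from arg_cong[OF this, of "\<lambda>x. x $ i"] have "poly (pderiv q) c * v $ i = 0"
    using i v(1) w(1) root by simp
  with i have "poly (pderiv q) c = 0" by simp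
  moreover have "pderiv q \<noteq> 0"
  proof
    assume "pderiv q = 0"
    then obtain a where "q = [:a:]"
      using pderiv_eq_0_iff degree_eq_zeroE by metis
    with q0 root show False by simp
  qed
  ultimately have "Polynomial.order c (pderiv q) \<noteq> 0"
    using order_root by blast
  then show ?thesis
    using order_pderiv[OF q0 root] by simp
qed

section \<open>Similarity is determined by the dimensions of generalized eigenspaces\<close>

lemma similar_mat_four_block_swap:
  fixes A B :: "'a :: comm_ring_1 mat"
  assumes A: "A \<in> carrier_mat n1 n1" and B: "B \<in> carrier_mat n2 n2"
  shows "similar_mat (four_block_mat A (0\<^sub>m n1 n2) (0\<^sub>m n2 n1) B)
    (four_block_mat B (0\<^sub>m n2 n1) (0\<^sub>m n1 n2) A)"
proof -
  define P where "P = four_block_mat (0\<^sub>m n1 n2) (1\<^sub>m n1) (1\<^sub>m n2) (0\<^sub>m n2 n1 :: 'a mat)"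
  define Q where "Q = four_block_mat (0\<^sub>m n2 n1) (1\<^sub>m n2) (1\<^sub>m n1) (0\<^sub>m n1 n2 :: 'a mat)"
  note mult = mult_four_block_mat[OF zero_carrier_mat one_carrier_mat one_carrier_mat zero_carrier_mat]
  have "P * Q = 1\<^sub>m (n1 + n2)"
    unfolding P_def Q_def
    by (subst mult[OF zero_carrier_mat one_carrier_mat one_carrier_mat zero_carrier_mat])
      (auto intro!: eq_matI)
  moreover have "Q * P = 1\<^sub>m (n1 + n2)"
    unfolding P_def Q_def
    by (subst mult[OF zero_carrier_mat one_carrier_mat one_carrier_mat zero_carrier_mat])
      (auto intro!: eq_matI)
  moreover have "P * four_block_mat B (0\<^sub>m n2 n1) (0\<^sub>m n1 n2) A = four_block_mat (0\<^sub>m n1 n2) A B (0\<^sub>m n2 n1)"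
    unfolding P_def using A B by (subst mult[OF B zero_carrier_mat zero_carrier_mat A]) (auto intro!: eq_matI)
  moreover have "four_block_mat (0\<^sub>m n1 n2) A B (0\<^sub>m n2 n1) * Q = four_block_mat A (0\<^sub>m n1 n2) (0\<^sub>m n2 n1) B"
    unfolding Q_def using A B
    by (subst mult_four_block_mat[OF zero_carrier_mat A B zero_carrier_mat zero_carrier_mat
          one_carrier_mat one_carrier_mat zero_carrier_mat]) (auto intro!: eq_matI)
  moreover have "P \<in> carrier_mat (n1 + n2) (n1 + n2)" "Q \<in> carrier_mat (n1 + n2) (n1 + n2)"
    unfolding P_def Q_def by auto
  ultimately show ?thesis
    using A B by (intro similar_matI[of _ _ P Q "n1 + n2"]) auto
qed

lemma jordan_matrix_two:
  "jordan_matrix [(n, a), (m, b)]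
    = four_block_mat (jordan_block n a) (0\<^sub>m n m) (0\<^sub>m m n) (jordan_block m b)"
  unfolding jordan_matrix_Cons by (simp add: jordan_matrix_def) (auto intro!: eq_matI)

lemma similar_jordan_matrix_Cons:
  fixes x :: "nat \<times> 'a :: comm_ring_1"
  assumes "similar_mat (jordan_matrix xs) (jordan_matrix ys)"
  shows "similar_mat (jordan_matrix (x # xs)) (jordan_matrix (x # ys))"
proof -
  obtain n a where x: "x = (n, a)" by force
  from similar_matD[OF assms] obtain k where
    c: "jordan_matrix xs \<in> carrier_mat k k" "jordan_matrix ys \<in> carrier_mat k k" by auto
  then have k: "sum_list (map fst xs) = k" "sum_list (map fst ys) = k" by auto
  show ?thesis
    unfolding x jordan_matrix_Cons k
    by (rule similar_mat_four_block_0_0[OF similar_mat_refl assms]) (use c in auto)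
qed

lemma similar_jordan_matrix_swap:
  fixes x y :: "nat \<times> 'a :: comm_ring_1"
  shows "similar_mat (jordan_matrix (x # y # zs)) (jordan_matrix (y # x # zs))"
proof -
  obtain n a m b where xy: "x = (n, a)" "y = (m, b)" by force
  let ?Z = "jordan_matrix zs" and ?k = "sum_list (map fst zs)"
  have split: "jordan_matrix (u # v # zs)
      = four_block_mat (jordan_matrix [u, v]) (0\<^sub>m (fst u + fst v) ?k) (0\<^sub>m ?k (fst u + fst v)) ?Z"
    for u v :: "nat \<times> 'a"
    using jordan_matrix_concat_diag_block_mat[of "[[u, v], zs]"]
    by (cases u, cases v) (auto simp: Let_def intro!: eq_matI)
  have sim: "similar_mat (jordan_matrix [x, y]) (jordan_matrix [y, x])"
    unfolding xy jordan_matrix_two by (rule similar_mat_four_block_swap) auto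
  show ?thesis
    unfolding split xy fst_conv add.commute[of m n]
    by (rule similar_mat_four_block_0_0[OF sim[unfolded xy] similar_mat_refl]) auto
qed

lemma similar_jordan_matrix_move:
  fixes x :: "nat \<times> 'a :: comm_ring_1"
  shows "similar_mat (jordan_matrix (x # ys1 @ ys2)) (jordan_matrix (ys1 @ x # ys2))"
proof (induct ys1)
  case Nil
  then show ?case by (auto intro: similar_mat_refl[OF jordan_matrix_carrier])
next
  case (Cons y ys1)
  have "similar_mat (jordan_matrix (x # y # ys1 @ ys2)) (jordan_matrix (y # x # ys1 @ ys2))"
    by (rule similar_jordan_matrix_swap)
  moreover have "similar_mat (jordan_matrix (y # x # ys1 @ ys2)) (jordan_matrix (y # ys1 @ x # ys2))"
    by (rule similar_jordan_matrix_Cons[OF Cons])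
  ultimately show ?case by (simp add: similar_mat_trans)
qed

lemma similar_jordan_matrix_if_mset_eq:
  fixes xs ys :: "(nat \<times> 'a :: comm_ring_1) list"
  shows "mset xs = mset ys \<Longrightarrow> similar_mat (jordan_matrix xs) (jordan_matrix ys)"
proof (induct xs arbitrary: ys)
  case Nil
  then show ?case by (auto intro: similar_mat_refl[OF jordan_matrix_carrier])
next
  case (Cons x xs)
  then obtain ys1 ys2 where ys: "ys = ys1 @ x # ys2"
    by (metis list.set_intros(1) set_mset_mset split_list)
  with Cons(2) have "mset xs = mset (ys1 @ ys2)" by simp
  from similar_mat_trans[OF similar_jordan_matrix_Cons[OF Cons(1)[OF this]] similar_jordan_matrix_move]
  show ?case unfolding ys .
qed

text \<open>By uniqueness of the Jordan normal form, the dimensions of the generalized eigenspaces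
  determine the multiset of Jordan blocks.\<close>

lemma similar_mat_if_dim_gen_eigenspace_eq:
  fixes A B :: "complex mat"
  assumes A: "A \<in> carrier_mat n n" and B: "B \<in> carrier_mat n n"
    and eq: "\<And>c k. dim_gen_eigenspace A c k = dim_gen_eigenspace B c k"
  shows "similar_mat A B"
proof -
  obtain as bs where "char_poly A = (\<Prod>a\<leftarrow>as. [:- a, 1:])" "char_poly B = (\<Prod>b\<leftarrow>bs. [:- b, 1:])"
    using char_poly_factorized[OF A] char_poly_factorized[OF B] by blast
  then obtain n_as m_bs where jA: "jordan_nf A n_as" and jB: "jordan_nf B m_bs"
    using jordan_nf_exists[OF A] jordan_nf_exists[OF B] by blast
  have "mset n_as = mset m_bs"
  proof (rule multiset_eqI)
    fix kc :: "nat \<times> complex"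
    obtain k c where kc: "kc = (k, c)" by force
    show "count (mset n_as) kc = count (mset m_bs) kc"
    proof (cases "k = 0")
      case True
      then have "kc \<notin> set n_as" "kc \<notin> set m_bs"
        using jA jB unfolding jordan_nf_def kc by force+
      then show ?thesis by (metis count_eq_zero_iff set_mset_mset)
    next
      case False
      have "compute_nr_of_jordan_blocks A c k = compute_nr_of_jordan_blocks B c k"
        unfolding compute_nr_of_jordan_blocks_def eq ..
      then show ?thesis
        unfolding kc count_mset count_list_eq_length_filter
          compute_nr_of_jordan_blocks[OF jA False, symmetric]
          compute_nr_of_jordan_blocks[OF jB False, symmetric] .
    qed
  qed
  from similar_jordan_matrix_if_mset_eq[OF this] jA jB show ?thesis
    unfolding jordan_nf_def using similar_mat_trans similar_mat_sym by blast
qed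

lemma conj_mat_carrier [simp]: "A \<in> carrier_mat nr nc \<Longrightarrow> conj_mat A \<in> carrier_mat nr nc"
  unfolding conj_mat_def by auto

lemma conj_mat_mult:
  assumes "A \<in> carrier_mat nr n" "B \<in> carrier_mat n nc"
  shows "conj_mat (A * B) = conj_mat A * conj_mat B"
proof -
  interpret semiring_hom cnj by unfold_locales auto
  show ?thesis unfolding conj_mat_def by (rule mat_hom_mult[OF assms])
qed

lemma det_conj_mat: "det (conj_mat A) = cnj (det A)"
proof -
  interpret comm_ring_hom cnj by unfold_locales auto
  show ?thesis unfolding conj_mat_def by (rule hom_det)
qed

lemma conj_mat_one [simp]: "conj_mat (1\<^sub>m n) = 1\<^sub>m n"
  unfolding conj_mat_def by (intro eq_matI) auto

lemma similar_mat_conj_mat: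
  assumes "similar_mat A B"
  shows "similar_mat (conj_mat A) (conj_mat B)"
proof -
  from similar_matD[OF assms] obtain n P Q where c: "{A, B, P, Q} \<subseteq> carrier_mat n n"
    and PQ: "P * Q = 1\<^sub>m n" "Q * P = 1\<^sub>m n" and AB: "A = P * B * Q" by auto
  show ?thesis
  proof (rule similar_matI[of _ _ "conj_mat P" "conj_mat Q" n])
    show "conj_mat P * conj_mat Q = 1\<^sub>m n"
      using conj_mat_mult[of P n n Q n] c PQ by auto
    show "conj_mat Q * conj_mat P = 1\<^sub>m n"
      using conj_mat_mult[of Q n n P n] c PQ by auto
    have "conj_mat (P * B * Q) = conj_mat (P * B) * conj_mat Q"
      using c by (intro conj_mat_mult[of _ n n]) auto
    also have "conj_mat (P * B) = conj_mat P * conj_mat B"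
      using c by (intro conj_mat_mult[of _ n n]) auto
    finally show "conj_mat A = conj_mat P * conj_mat B * conj_mat Q"
      unfolding AB .
  qed (use c in auto)
qed

lemma conj_mat_jordan_matrix:
  "conj_mat (jordan_matrix n_as) = jordan_matrix (map (\<lambda>(k, c). (k, cnj c)) n_as)"
proof (induct n_as)
  case Nil
  then show ?case unfolding jordan_matrix_def conj_mat_def by (intro eq_matI) auto
next
  case (Cons kc n_as)
  obtain k c where kc: "kc = (k, c)" by force
  have "sum_list (map fst (map (\<lambda>(k, c). (k, cnj c)) n_as)) = sum_list (map fst n_as)"
    by (induct n_as) auto
  moreover have "conj_mat (jordan_block k c) = jordan_block k (cnj c)"
    unfolding conj_mat_def by (intro eq_matI) auto
  ultimately show ?case
    using Cons unfolding kc jordan_matrix_Cons list.map prod.case conj_mat_def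
    by (subst map_four_block_mat) auto
qed

lemma jordan_nf_conj_mat:
  assumes "jordan_nf A n_as"
  shows "jordan_nf (conj_mat A) (map (\<lambda>(k, c). (k, cnj c)) n_as)"
proof -
  have "fst ` set (map (\<lambda>(k, c). (k, cnj c)) n_as) = fst ` set n_as" by (induct n_as) auto
  then show ?thesis
    using assms unfolding jordan_nf_def conj_mat_jordan_matrix[symmetric]
    by (auto dest: similar_mat_conj_mat)
qed

lemma dim_gen_eigenspace_conj_mat:
  fixes A :: "complex mat"
  assumes A: "A \<in> carrier_mat n n"
  shows "dim_gen_eigenspace (conj_mat A) (cnj c) k = dim_gen_eigenspace A c k"
proof -
  obtain as where "char_poly A = (\<Prod>a\<leftarrow>as. [:- a, 1:])"
    using char_poly_factorized[OF A] by blast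
  from jordan_nf_exists[OF A this] obtain n_as where jnf: "jordan_nf A n_as" ..
  show ?thesis
    unfolding dim_gen_eigenspace[OF jordan_nf_conj_mat[OF jnf]] dim_gen_eigenspace[OF jnf]
    by (induct n_as) auto
qed

lemma pow_mat_comm:
  assumes X: "X \<in> carrier_mat n n" and Y: "Y \<in> carrier_mat n n" and XY: "X * Y = Y * X"
  shows "X ^\<^sub>m k * Y = Y * X ^\<^sub>m k"
proof (induct k)
  case (Suc k)
  have Xk: "X ^\<^sub>m k \<in> carrier_mat n n" using X by auto
  have "X ^\<^sub>m Suc k * Y = X ^\<^sub>m k * (X * Y)" using assoc_mult_mat[OF Xk X Y] by simp
  also have "\<dots> = (X ^\<^sub>m k * Y) * X" unfolding XY using assoc_mult_mat[OF Xk Y X] by simp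
  also have "\<dots> = Y * X ^\<^sub>m Suc k" unfolding Suc using assoc_mult_mat[OF Y Xk X] by simp
  finally show ?case .
qed (use X Y in simp)

lemma pow_mat_mult_comm:
  assumes X: "X \<in> carrier_mat n n" and Y: "Y \<in> carrier_mat n n" and XY: "X * Y = Y * X"
  shows "(X * Y) ^\<^sub>m k = X ^\<^sub>m k * Y ^\<^sub>m k"
proof (induct k)
  case (Suc k)
  have Xk: "X ^\<^sub>m k \<in> carrier_mat n n" and Yk: "Y ^\<^sub>m k \<in> carrier_mat n n" using X Y by auto
  have "(X * Y) ^\<^sub>m Suc k = X ^\<^sub>m k * ((Y ^\<^sub>m k * X) * Y)"
    unfolding pow_mat.simps Suc
    using assoc_mult_mat[OF Xk Yk mult_carrier_mat[OF X Y]] assoc_mult_mat[OF Yk X Y] by simp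
  also have "Y ^\<^sub>m k * X = X * Y ^\<^sub>m k"
    using pow_mat_comm[OF Y X XY[symmetric]] .
  also have "X ^\<^sub>m k * ((X * Y ^\<^sub>m k) * Y) = X ^\<^sub>m Suc k * Y ^\<^sub>m Suc k"
    using assoc_mult_mat[OF Xk mult_carrier_mat[OF X Yk] Y] assoc_mult_mat[OF X Yk Y]
      assoc_mult_mat[OF Xk X mult_carrier_mat[OF Yk Y]] assoc_mult_mat[OF Xk X Yk] by simp
  finally show ?case .
qed (use X Y in simp)

lemma pow_mat_smult:
  assumes X: "(X :: 'a :: comm_ring_1 mat) \<in> carrier_mat n n"
  shows "(c \<cdot>\<^sub>m X) ^\<^sub>m k = c ^ k \<cdot>\<^sub>m X ^\<^sub>m k"
proof (induct k)
  case (Suc k)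
  have Xk: "X ^\<^sub>m k \<in> carrier_mat n n" using X by auto
  have "(c ^ k \<cdot>\<^sub>m X ^\<^sub>m k) * (c \<cdot>\<^sub>m X) = c ^ k \<cdot>\<^sub>m (X ^\<^sub>m k * (c \<cdot>\<^sub>m X))"
    by (rule mult_smult_assoc_mat[OF Xk]) (use X in auto)
  also have "X ^\<^sub>m k * (c \<cdot>\<^sub>m X) = c \<cdot>\<^sub>m (X ^\<^sub>m k * X)"
    by (rule mult_smult_distrib[OF Xk X])
  finally show ?case
    unfolding pow_mat.simps Suc using X Xk by (auto intro!: eq_matI)
qed (use X in \<open>auto intro!: eq_matI\<close>)

lemma pow_mat_inverse:
  assumes X: "X \<in> carrier_mat n n" and Y: "Y \<in> carrier_mat n n"
    and YX: "Y * X = 1\<^sub>m n" and XY: "X * Y = 1\<^sub>m n"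
  shows "Y ^\<^sub>m k * X ^\<^sub>m k = 1\<^sub>m n"
proof -
  have "(1\<^sub>m n :: 'a mat) ^\<^sub>m k = 1\<^sub>m n" by (induct k) auto
  then show ?thesis
    using pow_mat_mult_comm[OF Y X, of k] YX XY by simp
qed

lemma kernel_dim_mult_left_invertible:
  assumes X: "X \<in> carrier_mat n n" and Y: "Y \<in> carrier_mat n m" and Z: "Z \<in> carrier_mat n n"
    and ZX: "Z * X = 1\<^sub>m n"
  shows "kernel_dim (X * Y) = kernel_dim Y"
  unfolding kernel_dim_def using mat_kernel_mult_eq[OF Y X Z ZX] Y by simp

lemma char_matrix_inverse_pow:
  fixes M G :: "complex mat"
  assumes M: "M \<in> carrier_mat n n" and G: "G \<in> carrier_mat n n"
    and GM: "G * M = 1\<^sub>m n" and MG: "M * G = 1\<^sub>m n" and \<mu>: "\<mu> \<noteq> 0"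
  shows "char_matrix M (inverse \<mu>) ^\<^sub>m k
    = ((- inverse \<mu>) ^ k \<cdot>\<^sub>m M ^\<^sub>m k) * char_matrix G \<mu> ^\<^sub>m k"
proof -
  let ?C = "char_matrix G \<mu>"
  have C: "?C \<in> carrier_mat n n" using G by auto
  have MC: "M * ?C = 1\<^sub>m n - \<mu> \<cdot>\<^sub>m M"
    unfolding char_matrix_def using M G MG
    by (simp add: mult_add_distrib_mat[of _ n n] mult_smult_distrib[of _ n n _ n])
      (auto intro!: eq_matI)
  have "?C * M = 1\<^sub>m n - \<mu> \<cdot>\<^sub>m M"
    unfolding char_matrix_def using M G GM
    by (simp add: add_mult_distrib_mat[of _ n n]) (auto intro!: eq_matI)
  with MC have comm: "M * ?C = ?C * M" by simp
  have eq: "char_matrix M (inverse \<mu>) = (- inverse \<mu>) \<cdot>\<^sub>m (M * ?C)"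
    unfolding MC unfolding char_matrix_def using M \<mu> by (intro eq_matI) (auto simp: field_simps)
  show ?thesis
    unfolding eq pow_mat_smult[OF mult_carrier_mat[OF M C]] pow_mat_mult_comm[OF M C comm]
    using M C by (simp add: mult_smult_assoc_mat[of _ n n _ n])
qed

lemma dim_gen_eigenspace_inverse:
  fixes M G :: "complex mat"
  assumes M: "M \<in> carrier_mat n n" and G: "G \<in> carrier_mat n n"
    and GM: "G * M = 1\<^sub>m n" and MG: "M * G = 1\<^sub>m n"
  shows "dim_gen_eigenspace G \<mu> k = dim_gen_eigenspace M (inverse \<mu>) k"
proof (cases "\<mu> = 0")
  case True
  have "char_matrix G 0 = G" "char_matrix M 0 = M"
    using G M unfolding char_matrix_def by (auto intro!: eq_matI)
  moreover have "kernel_dim (G ^\<^sub>m k) = kernel_dim (1\<^sub>m n :: complex mat)"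
    using kernel_dim_mult_left_invertible[OF _ one_carrier_mat _ pow_mat_inverse[OF G M MG GM]] G M
    by simp
  moreover have "kernel_dim (M ^\<^sub>m k) = kernel_dim (1\<^sub>m n :: complex mat)"
    using kernel_dim_mult_left_invertible[OF _ one_carrier_mat _ pow_mat_inverse[OF M G GM MG]] G M
    by simp
  ultimately show ?thesis
    unfolding dim_gen_eigenspace_def True by simp
next
  case False
  have "((- \<mu>) ^ k \<cdot>\<^sub>m G ^\<^sub>m k) * ((- inverse \<mu>) ^ k \<cdot>\<^sub>m M ^\<^sub>m k) = 1\<^sub>m n"
  proof -
    have "(- inverse \<mu>) ^ k * (- \<mu>) ^ k = 1"
      using False by (simp add: power_mult_distrib[symmetric])
    then show ?thesis
      using pow_mat_inverse[OF M G GM MG, of k] M G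
      by (simp add: mult_smult_distrib[of _ n n _ n] mult_smult_assoc_mat[of _ n n _ n])
        (intro eq_matI, auto)
  qed
  then show ?thesis
    unfolding dim_gen_eigenspace_def char_matrix_inverse_pow[OF M G GM MG False] using M G
      char_matrix_closed[OF G, of \<mu>] by (simp add: kernel_dim_mult_left_invertible[of _ n _ n "(- \<mu>) ^ k \<cdot>\<^sub>m G ^\<^sub>m k"])
qed

section \<open>A criterion for c-reversibility\<close>

definition conj_inv :: "complex \<Rightarrow> complex" where
  "conj_inv z = inverse (cnj z)"

lemma conj_inv_conj_inv [simp]: "conj_inv (conj_inv z) = z"
  unfolding conj_inv_def by simp

lemma conj_inv_0 [simp]: "conj_inv 0 = 0"
  unfolding conj_inv_def by simp

lemma cnj_conj_inv [simp]: "cnj (conj_inv z) = inverse z"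
  unfolding conj_inv_def by simp

lemma dim_gen_eigenspace_inverse_conj_mat:
  assumes A: "A \<in> carrier_mat n n" and G: "is_inv_mat n G (conj_mat A)"
  shows "dim_gen_eigenspace G \<mu> k = dim_gen_eigenspace A (conj_inv \<mu>) k"
proof -
  from G have "dim_gen_eigenspace G \<mu> k = dim_gen_eigenspace (conj_mat A) (inverse \<mu>) k"
    unfolding is_inv_mat_def by (intro dim_gen_eigenspace_inverse) auto
  also have "\<dots> = dim_gen_eigenspace (conj_mat A) (cnj (conj_inv \<mu>)) k" by simp
  also have "\<dots> = dim_gen_eigenspace A (conj_inv \<mu>) k" by (rule dim_gen_eigenspace_conj_mat[OF A])
  finally show ?thesis .
qed

lemma is_inv_mat_adj_mat_conj_mat:
  assumes "A \<in> SL_mat n"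
  shows "is_inv_mat n (adj_mat (conj_mat A)) (conj_mat A)"
proof -
  from assms have M: "conj_mat A \<in> carrier_mat n n" and "det (conj_mat A) = 1"
    unfolding SL_mat_def det_conj_mat by auto
  with adj_mat[OF M] show ?thesis
    unfolding is_inv_mat_def by auto
qed

lemma exists_complex_root: "0 < n \<Longrightarrow> \<exists>c :: complex. c ^ n = z"
  by (rule exI[of _ "rcis (root n (cmod z)) (Arg z / real n)"]) (simp add: DeMoivre2 rcis_cmod_Arg)

text \<open>The similarity \<open>A = P G Q\<close> only has to be rescaled to determinant one, which is possible
  since every complex number has an \<open>n\<close>-th root.\<close>

lemma similar_mat_by_SL_mat:
  fixes A G :: "complex mat"
  assumes sim: "similar_mat A G" and A: "A \<in> carrier_mat n n"
  obtains h hinv where "h \<in> SL_mat n" "is_inv_mat n hinv h" "h * A * hinv = G"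
proof -
  from similar_matD[OF sim] obtain n' P Q where c: "{A, G, P, Q} \<subseteq> carrier_mat n' n'"
    and PQ: "P * Q = 1\<^sub>m n'" "Q * P = 1\<^sub>m n'" and AG: "A = P * G * Q" by auto
  from A c have [simp]: "n' = n" by auto
  from c have P: "P \<in> carrier_mat n n" and Q: "Q \<in> carrier_mat n n" and Gc: "G \<in> carrier_mat n n"
    by auto
  obtain c where c0: "c \<noteq> 0" and c: "c ^ n * det Q = 1"
  proof (cases "n = 0")
    case True
    with Q have "Q = 1\<^sub>m n" by (intro eq_matI) auto
    with True that[of 1] show ?thesis by simp
  next
    case False
    have "det P * det Q = 1" using det_mult[OF P Q] PQ by simp
    then have "det Q \<noteq> 0" by auto
    moreover obtain c where "c ^ n = inverse (det Q)"
      using False exists_complex_root by blast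
    ultimately show ?thesis
      using that[of c] False by (cases "c = 0") (auto simp: power_0_left)
  qed
  define h where "h = c \<cdot>\<^sub>m Q"
  define hinv where "hinv = inverse c \<cdot>\<^sub>m P"
  have "h \<in> SL_mat n"
    unfolding h_def SL_mat_def det_smult using Q c by simp
  moreover have "h * hinv = 1\<^sub>m n" "hinv * h = 1\<^sub>m n"
    unfolding h_def hinv_def using PQ c0 P Q
    by (auto simp: mult_smult_distrib[of _ n n _ n] mult_smult_assoc_mat[of _ n n _ n] intro!: eq_matI)
  then have "is_inv_mat n hinv h"
    unfolding is_inv_mat_def h_def hinv_def using P Q by auto
  moreover have "h * A * hinv = G"
  proof -
    have "h * A * hinv = Q * A * P"
      unfolding h_def hinv_def using c0 P Q A
      by (auto simp: mult_smult_distrib[of _ n n _ n] mult_smult_assoc_mat[of _ n n _ n] intro!: eq_matI)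
    also have "\<dots> = (Q * P) * G * (Q * P)"
      unfolding AG using P Q Gc by (simp add: assoc_mult_mat[of _ n n _ n _ n])
    also have "\<dots> = G" using PQ Gc by simp
    finally show ?thesis .
  qed
  ultimately show ?thesis using that by blast
qed

lemma c_reversible_iff_similar_mat:
  assumes A: "A \<in> SL_mat n" and G: "is_inv_mat n G (conj_mat A)"
  shows "c_reversible n A \<longleftrightarrow> similar_mat A G"
proof
  assume "c_reversible n A"
  then obtain h hinv ginv where h: "h \<in> carrier_mat n n" "hinv \<in> carrier_mat n n"
    "h * hinv = 1\<^sub>m n" "hinv * h = 1\<^sub>m n" and ginv: "is_inv_mat n ginv (conj_mat A)" and eq: "h * A * hinv = ginv"
    unfolding c_reversible_def is_inv_mat_def by auto
  from A have Ac: "A \<in> carrier_mat n n" unfolding SL_mat_def by auto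
  from G ginv have "ginv = G"
    unfolding is_inv_mat_def by (metis assoc_mult_mat left_mult_one_mat right_mult_one_mat)
  have "hinv * G * h = (hinv * h) * A * (hinv * h)"
    unfolding eq[unfolded \<open>ginv = G\<close>, symmetric] using h(1,2) Ac
    by (simp add: assoc_mult_mat[of _ n n _ n _ n])
  then have "A = hinv * G * h"
    using h(4) Ac by simp
  then show "similar_mat A G"
    using h Ac G unfolding is_inv_mat_def by (intro similar_matI[of _ _ hinv h n]) auto
next
  assume "similar_mat A G"
  moreover from A have "A \<in> carrier_mat n n" unfolding SL_mat_def by auto
  ultimately obtain h hinv where "h \<in> SL_mat n" "is_inv_mat n hinv h" "h * A * hinv = G"
    by (rule similar_mat_by_SL_mat)
  with G show "c_reversible n A"
    unfolding c_reversible_def by blast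
qed

theorem c_reversible_iff_dim_gen_eigenspace:
  assumes A: "A \<in> SL_mat n"
  shows "c_reversible n A \<longleftrightarrow> (\<forall>\<mu> k. dim_gen_eigenspace A \<mu> k = dim_gen_eigenspace A (conj_inv \<mu>) k)"
proof -
  let ?G = "adj_mat (conj_mat A)"
  have G: "is_inv_mat n ?G (conj_mat A)" by (rule is_inv_mat_adj_mat_conj_mat[OF A])
  from A have Ac: "A \<in> carrier_mat n n" unfolding SL_mat_def by auto
  have "c_reversible n A \<longleftrightarrow> similar_mat A ?G" by (rule c_reversible_iff_similar_mat[OF A G])
  also have "\<dots> \<longleftrightarrow> (\<forall>\<mu> k. dim_gen_eigenspace A \<mu> k = dim_gen_eigenspace ?G \<mu> k)"
    using dim_gen_eigenspace_similar similar_mat_if_dim_gen_eigenspace_eq[OF Ac] G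
    unfolding is_inv_mat_def by metis
  finally show ?thesis
    unfolding dim_gen_eigenspace_inverse_conj_mat[OF Ac G] .
qed

lemma order_prod_linear_factors:
  "Polynomial.order z (\<Prod>r\<leftarrow>as. [:- r, 1:]) = count (mset as) (z :: 'a :: idom)"
proof (induct as)
  case (Cons a as)
  have "(\<Prod>r\<leftarrow>as. [:- r, 1:]) \<noteq> 0" by (auto simp: prod_list_zero_iff)
  then have "Polynomial.order z (\<Prod>r\<leftarrow>a # as. [:- r, 1:])
      = Polynomial.order z [:- a, 1:] + Polynomial.order z (\<Prod>r\<leftarrow>as. [:- r, 1:])"
    unfolding list.map prod_list.Cons by (intro order_mult) (simp only: mult_eq_0_iff, simp)
  with Cons show ?case by (simp add: order_linear')
qed (simp add: order_0I)

lemma prod_linear_factors_eq_iff: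
  "(\<Prod>r\<leftarrow>as. [:- r, 1:]) = (\<Prod>r\<leftarrow>bs. [:- r, 1:]) \<longleftrightarrow> mset as = mset (bs :: 'a :: idom list)"
proof
  assume "(\<Prod>r\<leftarrow>as. [:- r, 1:]) = (\<Prod>r\<leftarrow>bs. [:- r, 1:])"
  then show "mset as = mset bs"
    by (metis multiset_eqI order_prod_linear_factors)
qed (metis mset_map prod_mset_prod_list)

lemma conj_inv_eq_iff: "conj_inv x = y \<longleftrightarrow> x = conj_inv y"
  by auto

lemma count_mset_map_conj_inv: "count (mset (map conj_inv as)) z = count (mset as) (conj_inv z)"
  by (induct as) (auto simp: conj_inv_eq_iff)

lemma c_reciprocal_iff_order:
  assumes "p \<noteq> 0"
  shows "c_reciprocal p \<longleftrightarrow> (\<forall>z. Polynomial.order (conj_inv z) p = Polynomial.order z p)"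
  unfolding c_reciprocal_def conj_inv_def[symmetric]
  by (metis assms conj_inv_conj_inv order_root)

lemma prod_linear_factors_4:
  "(\<Prod>r\<leftarrow>[r1, r2, r3, r4]. [:- r, 1:]) = ([: r1*r2*r3*r4, -(r1*r2*r3 + r1*r2*r4 + r1*r3*r4 + r2*r3*r4),
     r1*r2 + r1*r3 + r1*r4 + r2*r3 + r2*r4 + r3*r4, -(r1 + r2 + r3 + r4), 1:] :: 'a :: comm_ring_1 poly)"
  by (simp add: algebra_simps)

lemma prod_linear_factors_map_conj_inv:
  assumes p: "(\<Prod>r\<leftarrow>as. [:- r, 1:]) = [:1, -c1, c2, -c3, 1:]" and l: "length as = 4"
  shows "(\<Prod>r\<leftarrow>map conj_inv as. [:- r, 1:]) = [:1, -cnj c3, cnj c2, -cnj c1, 1:]"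
proof -
  obtain r1 r2 r3 r4 where as: "as = [r1, r2, r3, r4]"
    using l by (auto simp: length_Suc_conv numeral_eq_Suc)
  from p[unfolded as prod_linear_factors_4] have e: "r1*r2*r3*r4 = 1"
    "r1*r2*r3 + r1*r2*r4 + r1*r3*r4 + r2*r3*r4 = c1"
    "r1*r2 + r1*r3 + r1*r4 + r2*r3 + r2*r4 + r3*r4 = c2" "r1 + r2 + r3 + r4 = c3"
    by (simp_all only: pCons_eq_iff neg_equal_iff_equal simp_thms)
  define s1 s2 s3 s4 where "s1 = cnj r1" "s2 = cnj r2" "s3 = cnj r3" "s4 = cnj r4"
  have s: "s1*s2*s3*s4 = 1" using arg_cong[OF e(1), of cnj] unfolding s1_s2_s3_s4_def by simp
  then have nz: "s1 \<noteq> 0" "s2 \<noteq> 0" "s3 \<noteq> 0" by auto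
  with s have s4: "s4 = inverse (s1*s2*s3)" by (simp add: field_simps)
  have c: "cnj c1 = s1*s2*s3 + s1*s2*s4 + s1*s3*s4 + s2*s3*s4"
    "cnj c2 = s1*s2 + s1*s3 + s1*s4 + s2*s3 + s2*s4 + s3*s4" "cnj c3 = s1 + s2 + s3 + s4"
    unfolding e(2-4)[symmetric] s1_s2_s3_s4_def by simp_all
  have "map conj_inv as = [inverse s1, inverse s2, inverse s3, inverse s4]"
    unfolding as s1_s2_s3_s4_def conj_inv_def by simp
  then show ?thesis
    unfolding prod_linear_factors_4 c unfolding s4 using nz by (simp add: field_simps)
qed

theorem c_reciprocal_quartic_iff:
  "c_reciprocal [:1, -c1, c2, -c3, 1:] \<longleftrightarrow> c3 = cnj c1 \<and> c2 \<in> \<real>"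
proof -
  let ?p = "[:1, -c1, c2, -c3, 1:]"
  obtain as where "Polynomial.smult (lead_coeff ?p) (\<Prod>r\<leftarrow>as. [:- r, 1:]) = ?p"
    and "length as = degree ?p"
    using fundamental_theorem_algebra_factorized by blast
  then have p: "?p = (\<Prod>r\<leftarrow>as. [:- r, 1:])" and l: "length as = 4" by auto
  have "c_reciprocal ?p \<longleftrightarrow> (\<forall>z. Polynomial.order (conj_inv z) ?p = Polynomial.order z ?p)"
    by (rule c_reciprocal_iff_order) simp
  also have "\<dots> \<longleftrightarrow> mset (map conj_inv as) = mset as"
    unfolding p order_prod_linear_factors multiset_eq_iff count_mset_map_conj_inv ..
  also have "\<dots> \<longleftrightarrow> (\<Prod>r\<leftarrow>map conj_inv as. [:- r, 1:]) = (\<Prod>r\<leftarrow>as. [:- r, 1:])"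
    by (rule prod_linear_factors_eq_iff[symmetric])
  also have "\<dots> \<longleftrightarrow> [:1, -cnj c3, cnj c2, -cnj c1, 1:] = ?p"
    unfolding prod_linear_factors_map_conj_inv[OF p[symmetric] l] p ..
  also have "\<dots> \<longleftrightarrow> c3 = cnj c1 \<and> c2 \<in> \<real>"
    by (auto simp: Reals_cnj_iff)
  finally show ?thesis .
qed

section \<open>Traces of powers\<close>

lemma mat_trace_eq_sum_list_diag_mat: "mat_trace A = sum_list (diag_mat A)"
  unfolding mat_trace_def diag_mat_def by (simp add: sum_list_sum_nth lessThan_atLeast0)

lemma mat_trace_mult_comm:
  assumes A: "A \<in> carrier_mat n m" and B: "B \<in> carrier_mat m n"
  shows "mat_trace (A * B) = mat_trace (B * A)"
proof -
  have "mat_trace (A * B) = (\<Sum>i<n. \<Sum>j<m. A $$ (i, j) * B $$ (j, i))"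
    unfolding mat_trace_def using A B by (auto simp: scalar_prod_def atLeast0LessThan intro!: sum.cong)
  also have "\<dots> = (\<Sum>j<m. \<Sum>i<n. B $$ (j, i) * A $$ (i, j))"
    by (subst sum.swap) (auto simp: mult.commute)
  also have "\<dots> = mat_trace (B * A)"
    unfolding mat_trace_def using A B by (auto simp: scalar_prod_def atLeast0LessThan intro!: sum.cong)
  finally show ?thesis .
qed

lemma diag_mat_diag_block_mat:
  "(\<And>B. B \<in> set Bs \<Longrightarrow> dim_row B = dim_col B) \<Longrightarrow> diag_mat (diag_block_mat Bs) = concat (map diag_mat Bs)"
proof (induct Bs)
  case Nil
  then show ?case by (simp add: diag_mat_def)
next
  case (Cons B Bs)
  let ?D = "diag_block_mat Bs"
  have "dim_row ?D = dim_col ?D"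
    using Cons(2) by (subst dim_diag_block_mat)+ (induct Bs, auto)
  with Cons show ?case
    by (simp add: Let_def, subst diag_four_block_mat[of _ "dim_row B" _ "dim_row ?D"]) auto
qed

lemma mat_trace_jordan_matrix_pow:
  "mat_trace (jordan_matrix n_as ^\<^sub>m k) = (\<Sum>r\<leftarrow>concat (map (\<lambda>(n, a). replicate n a) n_as). r ^ k)"
  unfolding mat_trace_eq_sum_list_diag_mat jordan_matrix_pow
  by (subst diag_mat_diag_block_mat) (auto, induct n_as, auto simp: diag_jordan_block_pow map_replicate)

lemma mat_trace_pow_eq_sum_roots:
  fixes A :: "complex mat"
  assumes A: "A \<in> carrier_mat n n" and cp: "char_poly A = (\<Prod>r\<leftarrow>as. [:- r, 1:])"
  shows "mat_trace (A ^\<^sub>m k) = (\<Sum>r\<leftarrow>as. r ^ k)"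
proof -
  from jordan_nf_exists[OF A cp] obtain n_as where jnf: "jordan_nf A n_as" ..
  then obtain P Q where wit: "similar_mat_wit A (jordan_matrix n_as) P Q"
    unfolding jordan_nf_def similar_mat_def by auto
  from similar_mat_witD2[OF A wit] have J: "jordan_matrix n_as ^\<^sub>m k \<in> carrier_mat n n"
    and P: "P \<in> carrier_mat n n" and Q: "Q \<in> carrier_mat n n" and QP: "Q * P = 1\<^sub>m n" by auto
  have "mat_trace (A ^\<^sub>m k) = mat_trace (P * (jordan_matrix n_as ^\<^sub>m k * Q))"
    unfolding similar_mat_wit_pow_id[OF wit] using P J Q by simp
  also have "\<dots> = mat_trace (jordan_matrix n_as ^\<^sub>m k * Q * P)"
    using P J Q by (simp add: mat_trace_mult_comm[of P n n])
  also have "\<dots> = mat_trace (jordan_matrix n_as ^\<^sub>m k)"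
    using J Q P QP by (simp add: right_mult_one_mat[OF J])
  finally have tr: "mat_trace (A ^\<^sub>m k) = mat_trace (jordan_matrix n_as ^\<^sub>m k)" .
  let ?bs = "concat (map (\<lambda>(n, a). replicate n a) n_as)"
  have "(\<Prod>r\<leftarrow>as. [:- r, 1:]) = (\<Prod>(n, a)\<leftarrow>n_as. [:- a, 1:] ^ n)"
    unfolding cp[symmetric] by (rule jordan_nf_char_poly[OF jnf])
  also have "\<dots> = (\<Prod>r\<leftarrow>?bs. [:- r, 1:])"
    by (induct n_as) (auto simp: prod_list_replicate)
  finally have "mset as = mset ?bs"
    unfolding prod_linear_factors_eq_iff .
  then show ?thesis
    unfolding tr mat_trace_jordan_matrix_pow by (metis mset_map sum_mset_sum_list)
qed

lemma Bseq_sum_list_powers: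
  assumes "\<And>r. r \<in> set as \<Longrightarrow> norm r = 1"
  shows "Bseq (\<lambda>k. \<Sum>r\<leftarrow>as. (r :: complex) ^ k)"
proof (rule BseqI')
  fix k
  show "norm (\<Sum>r\<leftarrow>as. r ^ k) \<le> real (length as)"
    using assms
  proof (induct as)
    case (Cons r as)
    have "norm (r ^ k + (\<Sum>r\<leftarrow>as. r ^ k)) \<le> norm (r ^ k) + norm (\<Sum>r\<leftarrow>as. r ^ k)"
      by (rule norm_triangle_ineq)
    with Cons show ?case by (simp add: norm_power)
  qed simp
qed

lemma sum_list_map_min_eq: "sum_list xs \<le> k \<Longrightarrow> sum_list (map (min k) xs) = sum_list (xs :: nat list)"
  by (induct xs) (auto simp: min_def)

lemma sum_list_map_min_1: "(\<And>x. x \<in> set xs \<Longrightarrow> 1 \<le> x) \<Longrightarrow> sum_list (map (min 1) xs) = length (xs :: nat list)"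
  by (induct xs) auto

lemma length_le_sum_list: "(\<And>x. x \<in> set xs \<Longrightarrow> 1 \<le> x) \<Longrightarrow> length xs \<le> sum_list (xs :: nat list)"
  by (induct xs) force+

lemma member_add_length_le_sum_list:
  "s \<in> set xs \<Longrightarrow> (\<And>x. x \<in> set xs \<Longrightarrow> 1 \<le> x) \<Longrightarrow> s + length xs \<le> sum_list xs + (1 :: nat)"
proof (induct xs)
  case (Cons x xs)
  have x: "1 \<le> x" and pos: "\<And>y. y \<in> set xs \<Longrightarrow> 1 \<le> y" using Cons(3) by auto
  show ?case
  proof (cases "s = x")
    case True
    with length_le_sum_list[OF pos] show ?thesis by simp
  next
    case False
    with Cons(1)[OF _ pos] Cons(2) x show ?thesis by simp
  qed
qed simp

context
  fixes A :: "'a :: field mat" and n_as :: "(nat \<times> 'a) list"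
  assumes jnf: "jordan_nf A n_as"
begin

private abbreviation sizes :: "'a \<Rightarrow> nat list" where
  "sizes c \<equiv> map fst [(n, e)\<leftarrow>n_as. e = c]"

private lemma sizes_pos: "s \<in> set (sizes c) \<Longrightarrow> 1 \<le> s"
  using jnf unfolding jordan_nf_def by force

private lemma order_eq_sum_sizes: "Polynomial.order c (char_poly A) = sum_list (sizes c)"
proof -
  have "[(n, e)\<leftarrow>n_as. e = c] = filter (\<lambda>na. snd na = c) n_as" by (induct n_as) auto
  then show ?thesis unfolding jordan_nf_order[OF jnf] by simp
qed

private lemma dim_gen_eigenspace_eq_sum_sizes:
  "dim_gen_eigenspace A c k = sum_list (map (min k) (sizes c))"
  unfolding dim_gen_eigenspace[OF jnf] by (simp add: o_def)

lemma dim_gen_eigenspace_0: "dim_gen_eigenspace A c 0 = 0"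
  unfolding dim_gen_eigenspace_eq_sum_sizes by (induct n_as) auto

lemma dim_gen_eigenspace_le_order: "dim_gen_eigenspace A c k \<le> Polynomial.order c (char_poly A)"
  unfolding dim_gen_eigenspace_eq_sum_sizes order_eq_sum_sizes by (induct n_as) auto

lemma dim_gen_eigenspace_eq_order:
  "Polynomial.order c (char_poly A) \<le> k \<Longrightarrow> dim_gen_eigenspace A c k = Polynomial.order c (char_poly A)"
  unfolding dim_gen_eigenspace_eq_sum_sizes order_eq_sum_sizes by (rule sum_list_map_min_eq)

lemma dim_gen_eigenspace_pos:
  assumes "1 \<le> Polynomial.order c (char_poly A)" and "1 \<le> k"
  shows "1 \<le> dim_gen_eigenspace A c k"
proof -
  from assms(1) obtain s where s: "s \<in> set (sizes c)"
    unfolding order_eq_sum_sizes by (cases "sizes c") auto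
  then have "min k s \<le> sum_list (map (min k) (sizes c))"
    by (intro member_le_sum_list) auto
  with sizes_pos[OF s] assms(2) show ?thesis
    unfolding dim_gen_eigenspace_eq_sum_sizes by linarith
qed

lemma jordan_block_size_bound:
  assumes "(s, c) \<in> set n_as"
  shows "s + dim_gen_eigenspace A c 1 \<le> Polynomial.order c (char_poly A) + 1"
proof -
  have s: "s \<in> set (sizes c)" using assms by force
  have "dim_gen_eigenspace A c 1 = length (sizes c)"
    unfolding dim_gen_eigenspace_eq_sum_sizes using sizes_pos by (rule sum_list_map_min_1)
  with member_add_length_le_sum_list[OF s sizes_pos] show ?thesis
    unfolding order_eq_sum_sizes by simp
qed

end

text \<open>Since \<open>c\<close> has \<open>dim_gen_eigenspace A c 1\<close> Jordan blocks of total size equal to its multiplicity,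
  no block is larger than the exponent below.\<close>

lemma poly_mat_eq_0_if_power_dvd:
  fixes A :: "complex mat"
  assumes A: "A \<in> carrier_mat n n"
    and dvd: "\<And>c. poly (char_poly A) c = 0 \<Longrightarrow>
      [:-c, 1:] ^ (Polynomial.order c (char_poly A) + 1 - dim_gen_eigenspace A c 1) dvd q"
  shows "poly_mat n q A = 0\<^sub>m n n"
proof -
  obtain as where "char_poly A = (\<Prod>a\<leftarrow>as. [:- a, 1:])"
    using char_poly_factorized[OF A] by blast
  from jordan_nf_exists[OF A this] obtain n_as where jnf: "jordan_nf A n_as" ..
  show ?thesis
  proof (rule poly_mat_eq_0_if_jordan_nf[OF A jnf])
    fix s c assume sc: "(s, c) \<in> set n_as"
    have "1 \<le> s" using jnf sc unfolding jordan_nf_def by force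
    also have "s \<le> Polynomial.order c (char_poly A)"
      by (rule jordan_nf_block_size_order_bound[OF jnf sc])
    finally have "poly (char_poly A) c = 0" by (simp add: order_root)
    then have "[:-c, 1:] ^ (Polynomial.order c (char_poly A) + 1 - dim_gen_eigenspace A c 1) dvd q"
      by (rule dvd)
    moreover have "s \<le> Polynomial.order c (char_poly A) + 1 - dim_gen_eigenspace A c 1"
      using jordan_block_size_bound[OF jnf sc] by simp
    ultimately show "[:-c, 1:] ^ s dvd q"
      by (meson le_imp_power_dvd dvd_trans)
  qed
qed

section \<open>Four by four matrices with a repeated pair of eigenvalues\<close>

text \<open>A \<^emph>\<open>double pair\<close> is a characteristic polynomial \<open>((x - a)(x - b))\<^sup>2\<close> with \<open>a \<noteq> b\<close>. For
  c-reciprocal quartics, the double pairs with \<open>b = conj_inv a\<close> are the only obstruction to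
  c-reversibility.\<close>

lemma degree_ge_add_if_power_dvd:
  fixes p :: "'a :: idom poly"
  assumes p: "p \<noteq> 0" and xy: "x \<noteq> y" and dx: "[:-x, 1:] ^ i dvd p" and dy: "[:-y, 1:] ^ j dvd p"
  shows "i + j \<le> degree p"
proof -
  from dx obtain r where pr: "p = [:-x, 1:] ^ i * r" by (auto elim: dvdE)
  with p have r: "r \<noteq> 0" by auto
  have "j \<le> Polynomial.order y p" using dy p by (simp add: order_divides)
  also have "\<dots> = Polynomial.order y ([:-x, 1:] ^ i) + Polynomial.order y r"
    unfolding pr by (rule order_mult) (use p pr in auto)
  also have "Polynomial.order y ([:-x, 1:] ^ i) = 0"
    using xy by (intro order_0I) auto
  finally have "[:-y, 1:] ^ j dvd r" using r by (simp add: order_divides)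
  then have "degree ([:-y, 1:] ^ j) \<le> degree r" using r by (rule dvd_imp_degree_le)
  then have "j \<le> degree r" by (simp add: degree_linear_power)
  moreover have "degree p = i + degree r"
    unfolding pr using r by (simp add: degree_mult_eq degree_linear_power)
  ultimately show ?thesis by simp
qed

lemma prod_linear_factors_double_pair:
  "(\<Prod>r\<leftarrow>[a, a, b, b]. [:- r, 1:]) = ([:-a, 1:] * [:-b, 1:]) ^ 2"
  unfolding power2_eq_square by (simp only: list.map prod_list.Cons prod_list.Nil mult_1_right mult_1_left ac_simps)

lemma double_pair_if_count_eq_2:
  fixes a b :: "'a :: idom"
  assumes l: "length as = 4" and ab: "a \<noteq> b"
    and "count (mset as) a = 2" and "count (mset as) b = 2"
  shows "(\<Prod>r\<leftarrow>as. [:- r, 1:]) = ([:-a, 1:] * [:-b, 1:]) ^ 2"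
proof -
  have sub: "mset [a, a, b, b] \<subseteq># mset as"
    using assms by (intro mset_subset_eqI) auto
  have "mset [a, a, b, b] = mset as"
  proof (rule ccontr)
    assume "mset [a, a, b, b] \<noteq> mset as"
    with sub have "mset [a, a, b, b] \<subset># mset as" by (simp add: subset_mset.less_le)
    from mset_subset_size[OF this] l show False by simp
  qed
  then have "(\<Prod>r\<leftarrow>as. [:- r, 1:]) = (\<Prod>r\<leftarrow>[a, a, b, b]. [:- r, 1:])"
    by (intro iffD2[OF prod_linear_factors_eq_iff]) (rule sym)
  then show ?thesis
    by (simp only: prod_linear_factors_double_pair)
qed

lemma order_double_pair:
  fixes a b :: "'a :: idom"
  assumes "a \<noteq> b" and "c = a \<or> c = b"
  shows "Polynomial.order c (([:-a, 1:] * [:-b, 1:]) ^ 2) = 2"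
  using assms unfolding prod_linear_factors_double_pair[symmetric] order_prod_linear_factors by auto

lemma poly_double_pair_eq_0_iff:
  fixes a b :: "'a :: idom"
  shows "poly (([:-a, 1:] * [:-b, 1:]) ^ 2) c = 0 \<longleftrightarrow> c = a \<or> c = b"
  unfolding poly_power poly_mult by auto

text \<open>For an eigenvalue of multiplicity two, the exponent \<open>3 - dim_gen_eigenspace A c 1\<close> is the size of
  its largest Jordan block.\<close>

lemma power_dvd_minimal_poly_if_order_2:
  fixes A :: "complex mat"
  assumes A: "A \<in> carrier_mat n n" and ord: "Polynomial.order c (char_poly A) = 2"
  shows "[:-c, 1:] ^ (3 - dim_gen_eigenspace A c 1) dvd minimal_poly n A"
proof -
  obtain as where "char_poly A = (\<Prod>a\<leftarrow>as. [:- a, 1:])"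
    using char_poly_factorized[OF A] by blast
  from jordan_nf_exists[OF A this] obtain n_as where jnf: "jordan_nf A n_as" ..
  have "eigenvalue A c"
    using ord degree_monic_char_poly[OF A] unfolding eigenvalue_root_char_poly[OF A]
    by (auto simp: order_root)
  then have one: "[:-c, 1:] ^ 1 dvd minimal_poly n A"
    using poly_eq_0_if_poly_mat_eq_0[OF A minimal_polyD(3)[OF A]] by (simp add: poly_eq_0_iff_dvd)
  have two: "[:-c, 1:] ^ 2 dvd minimal_poly n A" if "dim_gen_eigenspace A c 1 = 1"
  proof -
    have "dim_gen_eigenspace A c 2 = 2"
      using dim_gen_eigenspace_eq_order[OF jnf] ord by simp
    with that have "2 \<le> Polynomial.order c (minimal_poly n A)"
      by (intro two_le_order_if_poly_mat_eq_0[OF A minimal_polyD(1,3)[OF A]]) simp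
    then show ?thesis
      using minimal_polyD(1)[OF A] by (simp add: order_divides)
  qed
  have "1 \<le> dim_gen_eigenspace A c 1" "dim_gen_eigenspace A c 1 \<le> 2"
    using dim_gen_eigenspace_pos[OF jnf, of c 1] dim_gen_eigenspace_le_order[OF jnf, of c 1] ord
    by simp_all
  then consider "dim_gen_eigenspace A c 1 = 1" | "dim_gen_eigenspace A c 1 = 2" by linarith
  then show ?thesis
    using one two by cases simp_all
qed

lemma degree_minimal_poly_double_pair:
  fixes A :: "complex mat"
  assumes A: "A \<in> carrier_mat 4 4" and cp: "char_poly A = ([:-a, 1:] * [:-b, 1:]) ^ 2" and ab: "a \<noteq> b"
  shows "degree (minimal_poly 4 A) = (3 - dim_gen_eigenspace A a 1) + (3 - dim_gen_eigenspace A b 1)"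
proof -
  let ?e = "\<lambda>c. 3 - dim_gen_eigenspace A c 1"
  have ord: "Polynomial.order c (char_poly A) = 2" if "c = a \<or> c = b" for c
    unfolding cp using order_double_pair[OF ab that] .
  define q where "q = [:-a, 1:] ^ ?e a * [:-b, 1:] ^ ?e b"
  have q0: "q \<noteq> 0" unfolding q_def by auto
  have "poly_mat 4 q A = 0\<^sub>m 4 4"
  proof (rule poly_mat_eq_0_if_power_dvd[OF A])
    fix c assume "poly (char_poly A) c = 0"
    then have c: "c = a \<or> c = b" unfolding cp poly_double_pair_eq_0_iff .
    then show "[:-c, 1:] ^ (Polynomial.order c (char_poly A) + 1 - dim_gen_eigenspace A c 1) dvd q"
      unfolding ord[OF c] q_def by (auto simp: numeral_3_eq_3)
  qed
  then have "degree (minimal_poly 4 A) \<le> degree q"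
    by (rule minimal_polyD(4)[OF A q0])
  also have "degree q = ?e a + ?e b"
    unfolding q_def by (simp add: degree_mult_eq degree_linear_power)
  finally show ?thesis
    using degree_ge_add_if_power_dvd[OF minimal_polyD(1)[OF A] ab
        power_dvd_minimal_poly_if_order_2[OF A ord] power_dvd_minimal_poly_if_order_2[OF A ord]]
    by simp
qed

lemma degree_minimal_poly_eq_3_iff:
  fixes A :: "complex mat"
  assumes A: "A \<in> carrier_mat 4 4" and cp: "char_poly A = ([:-a, 1:] * [:-b, 1:]) ^ 2" and ab: "a \<noteq> b"
  shows "degree (minimal_poly 4 A) = 3 \<longleftrightarrow> dim_gen_eigenspace A a 1 \<noteq> dim_gen_eigenspace A b 1"
proof -
  obtain as where "char_poly A = (\<Prod>a\<leftarrow>as. [:- a, 1:])"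
    using char_poly_factorized[OF A] by blast
  from jordan_nf_exists[OF A this] obtain n_as where jnf: "jordan_nf A n_as" ..
  have "1 \<le> dim_gen_eigenspace A c 1 \<and> dim_gen_eigenspace A c 1 \<le> 2" if "c = a \<or> c = b" for c
    using dim_gen_eigenspace_pos[OF jnf, of c 1] dim_gen_eigenspace_le_order[OF jnf, of c 1]
      order_double_pair[OF ab that] unfolding cp by simp
  then have "dim_gen_eigenspace A a 1 \<in> {1, 2}" "dim_gen_eigenspace A b 1 \<in> {1, 2}"
    by fastforce+
  then show ?thesis
    unfolding degree_minimal_poly_double_pair[OF A cp ab] by auto
qed

lemma conj_inv_eq_self_iff:
  assumes "z \<noteq> 0"
  shows "conj_inv z = z \<longleftrightarrow> norm z = 1"
proof -
  have "conj_inv z = z \<longleftrightarrow> z * cnj z = 1"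
    using assms by (auto simp: conj_inv_def field_simps)
  also have "\<dots> \<longleftrightarrow> (norm z)\<^sup>2 = 1"
    unfolding complex_norm_square[symmetric] by (metis of_real_1 of_real_eq_iff)
  also have "\<dots> \<longleftrightarrow> norm z = 1"
    by (simp add: abs_square_eq_1)
  finally show ?thesis .
qed

lemma not_c_reversible_imp_double_pair:
  assumes A: "A \<in> SL_mat 4" and rec: "c_reciprocal (char_poly A)" and "\<not> c_reversible 4 A"
  obtains a where "a \<noteq> conj_inv a" "char_poly A = ([:-a, 1:] * [:-conj_inv a, 1:]) ^ 2"
    "dim_gen_eigenspace A a 1 \<noteq> dim_gen_eigenspace A (conj_inv a) 1"
proof -
  from A have Ac: "A \<in> carrier_mat 4 4" unfolding SL_mat_def by auto
  obtain as where cp: "char_poly A = (\<Prod>a\<leftarrow>as. [:- a, 1:])" and l: "length as = 4"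
    using char_poly_factorized[OF Ac] by blast
  from jordan_nf_exists[OF Ac cp] obtain n_as where jnf: "jordan_nf A n_as" ..
  have cp0: "char_poly A \<noteq> 0" and deg: "degree (char_poly A) = 4"
    using degree_monic_char_poly[OF Ac] by auto
  from assms obtain \<mu> k where ne: "dim_gen_eigenspace A \<mu> k \<noteq> dim_gen_eigenspace A (conj_inv \<mu>) k"
    using c_reversible_iff_dim_gen_eigenspace by blast
  let ?m = "Polynomial.order \<mu> (char_poly A)"
  have m: "Polynomial.order (conj_inv \<mu>) (char_poly A) = ?m"
    using rec c_reciprocal_iff_order[OF cp0] by blast
  have \<mu>: "\<mu> \<noteq> conj_inv \<mu>" using ne by metis
  have "k \<noteq> 0" using ne dim_gen_eigenspace_0[OF jnf] by metis
  moreover have "\<not> ?m \<le> k"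
    using ne dim_gen_eigenspace_eq_order[OF jnf, of \<mu> k] dim_gen_eigenspace_eq_order[OF jnf, of "conj_inv \<mu>" k]
    unfolding m by auto
  moreover have "?m + ?m \<le> 4"
    using degree_ge_add_if_power_dvd[OF cp0 \<mu>, of ?m ?m] m deg by (simp add: order_divides)
  ultimately have m2: "?m = 2" and k: "k = 1" by auto
  have "char_poly A = ([:-\<mu>, 1:] * [:-conj_inv \<mu>, 1:]) ^ 2"
    unfolding cp using l \<mu> m m2 by (intro double_pair_if_count_eq_2) (auto simp: cp order_prod_linear_factors)
  with that \<mu> ne k show ?thesis by blast
qed

theorem c_reversible_iff_no_double_pair:
  assumes A: "A \<in> SL_mat 4" and rec: "c_reciprocal (char_poly A)"
  shows "c_reversible 4 A \<longleftrightarrow> \<not> (\<exists>a. a \<noteq> conj_inv a \<and> char_poly A = ([:-a, 1:] * [:-conj_inv a, 1:]) ^ 2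
    \<and> degree (minimal_poly 4 A) = 3)"
proof -
  from A have Ac: "A \<in> carrier_mat 4 4" unfolding SL_mat_def by auto
  show ?thesis
    using c_reversible_iff_dim_gen_eigenspace[OF A] not_c_reversible_imp_double_pair[OF A rec]
      degree_minimal_poly_eq_3_iff[OF Ac] by metis
qed

lemma mat_trace_pow_double_pair:
  fixes A :: "complex mat"
  assumes A: "A \<in> carrier_mat n n" and cp: "char_poly A = ([:-a, 1:] * [:-b, 1:]) ^ 2"
  shows "mat_trace (A ^\<^sub>m k) = 2 * (a ^ k + b ^ k)"
  using mat_trace_pow_eq_sum_roots[OF A cp[folded prod_linear_factors_double_pair]] by simp

lemma not_Bseq_add_powers:
  fixes u w :: complex
  assumes u: "1 < norm u" and w: "norm w \<le> 1"
  shows "\<not> Bseq (\<lambda>k. u ^ k + w ^ k)"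
proof
  assume "Bseq (\<lambda>k. u ^ k + w ^ k)"
  then obtain K where K: "\<And>k. norm (u ^ k + w ^ k) \<le> K" unfolding Bseq_def by auto
  have "norm u ^ k \<le> K + 1" for k
  proof -
    have "norm (u ^ k) \<le> norm (u ^ k + w ^ k) + norm (w ^ k)"
      by (metis add_diff_cancel norm_triangle_ineq4)
    moreover have "norm (w ^ k) \<le> 1" using w by (simp add: norm_power power_le_one)
    ultimately show ?thesis using K[of k] by (simp add: norm_power)
  qed
  moreover obtain k where "K + 1 < norm u ^ k" using real_arch_pow[OF u] by blast
  ultimately show False by (meson not_le)
qed

lemma not_Bseq_powers_conj_inv:
  assumes "a \<noteq> conj_inv a"
  shows "\<not> Bseq (\<lambda>k. 2 * (a ^ k + conj_inv a ^ k))"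
proof -
  have a0: "a \<noteq> 0" using assms by auto
  then have "norm a \<noteq> 1" using assms conj_inv_eq_self_iff by metis
  moreover have "norm (conj_inv a) = inverse (norm a)"
    unfolding conj_inv_def by (simp add: norm_inverse)
  ultimately have "1 < norm a \<and> norm (conj_inv a) \<le> 1 \<or> 1 < norm (conj_inv a) \<and> norm a \<le> 1"
    using a0 by (auto simp: one_less_inverse_iff inverse_le_1_iff)
  then have "\<not> Bseq (\<lambda>k. a ^ k + conj_inv a ^ k)"
    using not_Bseq_add_powers by (metis (no_types, lifting) add.commute ext)
  then show ?thesis by (subst Bseq_cmult_iff) auto
qed

lemma c_reversible_if_Bseq_mat_trace:
  assumes A: "A \<in> SL_mat 4" and rec: "c_reciprocal (char_poly A)"
    and bounded: "Bseq (\<lambda>k. mat_trace (A ^\<^sub>m k))"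
  shows "c_reversible 4 A"
proof (rule ccontr)
  assume "\<not> c_reversible 4 A"
  then obtain a where a: "a \<noteq> conj_inv a" and cp: "char_poly A = ([:-a, 1:] * [:-conj_inv a, 1:]) ^ 2"
    using c_reversible_iff_no_double_pair[OF A rec] by blast
  from A have Ac: "A \<in> carrier_mat 4 4" unfolding SL_mat_def by auto
  from bounded not_Bseq_powers_conj_inv[OF a] show False
    unfolding mat_trace_pow_double_pair[OF Ac cp] by simp
qed

text \<open>An unbounded trace sequence yields a root off the unit circle; if the characteristic polynomial
  is a square, that root and its partner \<open>conj_inv\<close> are both double.\<close>

lemma double_pair_if_square:
  fixes A :: "complex mat"
  assumes A: "A \<in> carrier_mat 4 4" and nonsing: "poly (char_poly A) 0 \<noteq> 0"
    and rec: "c_reciprocal (char_poly A)" and sq: "char_poly A = q * q"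
    and unbounded: "\<not> Bseq (\<lambda>k. mat_trace (A ^\<^sub>m k))"
  shows "\<exists>a. a \<noteq> conj_inv a \<and> char_poly A = ([:-a, 1:] * [:-conj_inv a, 1:]) ^ 2"
proof -
  obtain as where cp: "char_poly A = (\<Prod>a\<leftarrow>as. [:- a, 1:])" and l: "length as = 4"
    using char_poly_factorized[OF A] by blast
  have cp0: "char_poly A \<noteq> 0" and deg: "degree (char_poly A) = 4"
    using degree_monic_char_poly[OF A] by auto
  from unbounded obtain r where r: "r \<in> set as" and nr: "norm r \<noteq> 1"
    using Bseq_sum_list_powers unfolding mat_trace_pow_eq_sum_roots[OF A cp] by blast
  have root: "poly (char_poly A) r = 0"
    using r unfolding cp by (auto simp: poly_prod_list_zero_iff)
  with nonsing have "r \<noteq> 0" by auto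
  with nr have rr: "r \<noteq> conj_inv r" using conj_inv_eq_self_iff by metis
  have q0: "q \<noteq> 0" using cp0 sq by auto
  have "poly q r = 0" using root sq by simp
  then have "1 \<le> Polynomial.order r q" using q0 by (simp add: order_root Suc_le_eq)
  moreover have "Polynomial.order r (char_poly A) = Polynomial.order r q + Polynomial.order r q"
    unfolding sq using q0 by (simp add: order_mult)
  moreover have ord: "Polynomial.order (conj_inv r) (char_poly A) = Polynomial.order r (char_poly A)"
    using rec c_reciprocal_iff_order[OF cp0] by blast
  moreover have "Polynomial.order r (char_poly A) + Polynomial.order (conj_inv r) (char_poly A) \<le> 4"
    using degree_ge_add_if_power_dvd[OF cp0 rr] deg by (simp add: order_divides)
  ultimately have "count (mset as) r = 2" "count (mset as) (conj_inv r) = 2"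
    unfolding cp order_prod_linear_factors by auto
  with l rr have "char_poly A = ([:-r, 1:] * [:-conj_inv r, 1:]) ^ 2"
    unfolding cp by (intro double_pair_if_count_eq_2)
  with rr show ?thesis by blast
qed

lemma double_pair_coeffs:
  fixes a b c1 c2 c3 :: complex
  assumes p: "[:1, -c1, c2, -c3, 1:] = ([:-a, 1:] * [:-b, 1:]) ^ 2"
  shows "c3 = 2 * (a + b)" "c2 = c3\<^sup>2 / 4 + 2 * (a * b)" "(a * b)\<^sup>2 = 1"
proof -
  have "([:-a, 1:] * [:-b, 1:]) ^ 2
      = [:(a * b)\<^sup>2, - (2 * (a * b) * (a + b)), (a + b)\<^sup>2 + 2 * (a * b), - (2 * (a + b)), 1:]"
    by (simp add: power2_eq_square algebra_simps)
  with p have "1 = (a * b)\<^sup>2 \<and> c1 = 2 * (a * b) * (a + b) \<and> c2 = (a + b)\<^sup>2 + 2 * (a * b) \<and> c3 = 2 * (a + b)"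
    by (simp only: pCons_eq_iff neg_equal_iff_equal simp_thms)
  then show "c3 = 2 * (a + b)" "c2 = c3\<^sup>2 / 4 + 2 * (a * b)" "(a * b)\<^sup>2 = 1"
    by (auto simp: power2_eq_square algebra_simps)
qed

text \<open>The product \<open>a \<cdot> conj_inv a = a / cnj a\<close> squares to the constant coefficient \<open>1\<close>, so it is \<open>\<plusminus>1\<close>
  and \<open>a\<close> is real or purely imaginary.\<close>

lemma double_pair_coeffs_cases:
  assumes a: "a \<noteq> conj_inv a" and p: "[:1, -c1, c2, -c3, 1:] = ([:-a, 1:] * [:-conj_inv a, 1:]) ^ 2"
  shows "(c3 \<in> \<real> \<and> c2 = c3\<^sup>2 / 4 + 2) \<or> (Re c3 = 0 \<and> c3 \<noteq> 0 \<and> c2 = c3\<^sup>2 / 4 - 2)"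
proof -
  note c = double_pair_coeffs[OF p]
  have a0: "a \<noteq> 0" using a by auto
  from c(3) have "a * conj_inv a = 1 \<or> a * conj_inv a = -1" by (simp add: power2_eq_1_iff)
  then show ?thesis
  proof
    assume ab: "a * conj_inv a = 1"
    then have "cnj a = a" using a0 by (simp add: conj_inv_def field_simps)
    then have "cnj c3 = c3" unfolding c(1) conj_inv_def by simp
    with c(2) ab show ?thesis by (simp add: Reals_cnj_iff)
  next
    assume ab: "a * conj_inv a = -1"
    then have "a = - cnj a" using a0 by (simp add: conj_inv_def field_simps)
    then have cnj_a: "cnj a = - a" by (metis add.inverse_inverse)
    then have c3: "c3 = 2 * (a - inverse a)" unfolding c(1) conj_inv_def by simp
    then have "cnj c3 = - c3" using cnj_a by simp
    from arg_cong[OF this, of Re] have "Re c3 = 0" by simp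
    moreover have "c3 \<noteq> 0"
    proof
      assume "c3 = 0"
      with c3 a0 have "a * a = 1" by (simp add: field_simps)
      then have "a = 1 \<or> a = -1" by (simp add: square_eq_1_iff)
      with cnj_a show False by auto
    qed
    ultimately show ?thesis using c(2) ab by simp
  qed
qed

lemma square_if_coeffs:
  assumes sym: "c3 = cnj c1"
    and coeffs: "(c3 \<in> \<real> \<and> c2 = c3\<^sup>2 / 4 + 2) \<or> (Re c3 = 0 \<and> c2 = c3\<^sup>2 / 4 - 2)"
  shows "\<exists>q. [:1, -c1, c2, -c3, 1:] = q * q"
  using coeffs
proof
  assume real: "c3 \<in> \<real> \<and> c2 = c3\<^sup>2 / 4 + 2"
  then have "c1 = c3" using sym by (simp add: Reals_cnj_iff)
  then have "[:1, -c1, c2, -c3, 1:] = [:1, -c3/2, 1:] * [:1, -c3/2, 1:]"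
    using real by (simp add: algebra_simps power2_eq_square)
  then show ?thesis by blast
next
  assume imag: "Re c3 = 0 \<and> c2 = c3\<^sup>2 / 4 - 2"
  then have "cnj c3 = - c3" by (simp add: complex_eq_iff)
  then have "c1 = - c3" using sym by simp
  then have "[:1, -c1, c2, -c3, 1:] = [:-1, -c3/2, 1:] * [:-1, -c3/2, 1:]"
    using imag by (simp add: algebra_simps power2_eq_square)
  then show ?thesis by blast
qed

theorem c_reversible_iff_coeffs:
  assumes A: "A \<in> SL_mat 4" and chi: "char_poly A = [:1, -c1, c2, -c3, 1:]"
    and sym: "c3 = cnj c1" "c2 \<in> \<real>"
    and unbounded: "\<not> Bseq (\<lambda>k. mat_trace (A ^\<^sub>m k))" and deg: "degree (minimal_poly 4 A) = 3"
  shows "c_reversible 4 A \<longleftrightarrow>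
    \<not> ((c3 \<in> \<real> \<and> c2 = c3\<^sup>2 / 4 + 2) \<or> (Re c3 = 0 \<and> c3 \<noteq> 0 \<and> c2 = c3\<^sup>2 / 4 - 2))"
proof -
  from A have Ac: "A \<in> carrier_mat 4 4" unfolding SL_mat_def by auto
  have rec: "c_reciprocal (char_poly A)"
    unfolding chi c_reciprocal_quartic_iff using sym by simp
  have "c_reversible 4 A \<longleftrightarrow>
      \<not> (\<exists>a. a \<noteq> conj_inv a \<and> char_poly A = ([:-a, 1:] * [:-conj_inv a, 1:]) ^ 2)"
    using c_reversible_iff_no_double_pair[OF A rec] deg by simp
  also have "(\<exists>a. a \<noteq> conj_inv a \<and> char_poly A = ([:-a, 1:] * [:-conj_inv a, 1:]) ^ 2) \<longleftrightarrow>
      (c3 \<in> \<real> \<and> c2 = c3\<^sup>2 / 4 + 2) \<or> (Re c3 = 0 \<and> c3 \<noteq> 0 \<and> c2 = c3\<^sup>2 / 4 - 2)"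
  proof
    assume "\<exists>a. a \<noteq> conj_inv a \<and> char_poly A = ([:-a, 1:] * [:-conj_inv a, 1:]) ^ 2"
    then show "(c3 \<in> \<real> \<and> c2 = c3\<^sup>2 / 4 + 2) \<or> (Re c3 = 0 \<and> c3 \<noteq> 0 \<and> c2 = c3\<^sup>2 / 4 - 2)"
      using double_pair_coeffs_cases unfolding chi by blast
  next
    assume "(c3 \<in> \<real> \<and> c2 = c3\<^sup>2 / 4 + 2) \<or> (Re c3 = 0 \<and> c3 \<noteq> 0 \<and> c2 = c3\<^sup>2 / 4 - 2)"
    then obtain q where sq: "char_poly A = q * q"
      unfolding chi using square_if_coeffs[OF sym(1)] by blast
    show "\<exists>a. a \<noteq> conj_inv a \<and> char_poly A = ([:-a, 1:] * [:-conj_inv a, 1:]) ^ 2"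
      by (rule double_pair_if_square[OF Ac _ rec sq unbounded]) (simp add: chi)
  qed
  finally show ?thesis .
qed

lemma mat_trace_quartic:
  fixes A :: "complex mat"
  assumes A: "A \<in> carrier_mat 4 4" and chi: "char_poly A = [:1, -c1, c2, -c3, 1:]"
  shows "mat_trace A = c3"
proof -
  obtain as where cp: "char_poly A = (\<Prod>a\<leftarrow>as. [:- a, 1:])" and l: "length as = 4"
    using char_poly_factorized[OF A] by blast
  then obtain r1 r2 r3 r4 where as: "as = [r1, r2, r3, r4]"
    by (auto simp: length_Suc_conv numeral_eq_Suc)
  from chi[unfolded cp as prod_linear_factors_4] have "r1 + r2 + r3 + r4 = c3"
    by (simp only: pCons_eq_iff neg_equal_iff_equal)
  with mat_trace_pow_eq_sum_roots[OF A cp, of 1] A show ?thesis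
    unfolding as by (simp add: add.assoc)
qed

theorem theorem1p6:
  fixes A :: "complex mat" and c1 c2 c3 :: complex
  assumes SL: "A \<in> SL_mat 4"
    and chi: "char_poly A = [:1, -c1, c2, -c3, 1:]"
  shows "(c3 \<noteq> cnj c1 \<or> c2 \<notin> \<real> \<longrightarrow> \<not> c_reciprocal (char_poly A))
    \<and> (c3 = cnj c1 \<and> c2 \<in> \<real> \<longrightarrow>
         ((Bseq (\<lambda>n. mat_trace (A ^\<^sub>m n)) \<longrightarrow> c_reversible 4 A)
        \<and> (\<not> Bseq (\<lambda>n. mat_trace (A ^\<^sub>m n)) \<and> degree (minimal_poly 4 A) \<noteq> 3 \<longrightarrow> c_reversible 4 A)
        \<and> (\<not> Bseq (\<lambda>n. mat_trace (A ^\<^sub>m n)) \<and> degree (minimal_poly 4 A) = 3 \<longrightarrow>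
             (Re (mat_trace A) \<noteq> 0 \<and> Im (mat_trace A) \<noteq> 0 \<longrightarrow> c_reversible 4 A)
           \<and> (mat_trace A \<in> \<real> \<longrightarrow> (c_reversible 4 A \<longleftrightarrow> c2 \<noteq> c3\<^sup>2 / 4 + 2))
           \<and> (Re (mat_trace A) = 0 \<and> Im (mat_trace A) \<noteq> 0 \<longrightarrow> (c_reversible 4 A \<longleftrightarrow> c2 \<noteq> c3\<^sup>2 / 4 - 2)))))"
proof (intro conjI impI)
  show "c3 \<noteq> cnj c1 \<or> c2 \<notin> \<real> \<Longrightarrow> \<not> c_reciprocal (char_poly A)"
    unfolding chi c_reciprocal_quartic_iff by blast
  assume sym: "c3 = cnj c1 \<and> c2 \<in> \<real>"
  then have rec: "c_reciprocal (char_poly A)"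
    unfolding chi c_reciprocal_quartic_iff by blast
  show "Bseq (\<lambda>n. mat_trace (A ^\<^sub>m n)) \<Longrightarrow> c_reversible 4 A"
    by (rule c_reversible_if_Bseq_mat_trace[OF SL rec])
  show "\<not> Bseq (\<lambda>n. mat_trace (A ^\<^sub>m n)) \<and> degree (minimal_poly 4 A) \<noteq> 3 \<Longrightarrow> c_reversible 4 A"
    using c_reversible_iff_no_double_pair[OF SL rec] by blast
  assume "\<not> Bseq (\<lambda>n. mat_trace (A ^\<^sub>m n)) \<and> degree (minimal_poly 4 A) = 3"
  then have rev: "c_reversible 4 A \<longleftrightarrow>
      \<not> ((c3 \<in> \<real> \<and> c2 = c3\<^sup>2 / 4 + 2) \<or> (Re c3 = 0 \<and> c3 \<noteq> 0 \<and> c2 = c3\<^sup>2 / 4 - 2))"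
    using c_reversible_iff_coeffs[OF SL chi] sym by blast
  have tr: "mat_trace A = c3"
    using SL chi mat_trace_quartic unfolding SL_mat_def by blast
  show "Re (mat_trace A) \<noteq> 0 \<and> Im (mat_trace A) \<noteq> 0 \<Longrightarrow> c_reversible 4 A"
    "mat_trace A \<in> \<real> \<Longrightarrow> c_reversible 4 A \<longleftrightarrow> c2 \<noteq> c3\<^sup>2 / 4 + 2"
    "Re (mat_trace A) = 0 \<and> Im (mat_trace A) \<noteq> 0 \<Longrightarrow> c_reversible 4 A \<longleftrightarrow> c2 \<noteq> c3\<^sup>2 / 4 - 2"
    unfolding rev tr by (auto simp: complex_is_Real_iff complex_eq_iff)
qed

end
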